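(* The functionality problem for SRT is undecidable: there is no algorithm that, given an SRT $\mathcal{S}$, decides whether $\mathcal{S}$ is functional.
   Context: A linear group is a triple $\mathbf{G}=(D,\leq,+)$ where $D$ is an infinite set, $\leq$ is a total order on $D$, and $(D,+)$ is a group with identity $0$. For finite label sets $\Sigma,\Gamma$, a $(\Sigma,\Gamma,\mathbf{G})$-SRT is a tuple $\mathcal{S}=(Q,q_0,k,R_0,\Delta)$: $Q$ finite set of states, $q_0\in Q$, $k\in\mathbb{N}$ registers, initial values $R_0\in D^k$, transitions $\Delta\subseteq Q\times\Sigma\times\{>,=,<\}^k\times\{\mathsf{old},\mathsf{new},\mathsf{add}\}^k\times\{1,\dots,k\}\times\Gamma\times Q$. A transition $(q,\sigma,l,m,u,\gamma,q')$ enables the step $(q,R)\xrightarrow[(\gamma,d')]{(\sigma,d)}(q',R')$ iff (1) for every $i$, $d>R[i]$, $d=R[i]$ or $d<R[i]$ according as $l[i]$ is $>$, $=$, $<$; (2) $R'[i]=R[i]$, $d$, or $R[i]+d$ according as $m[i]$ is $\mathsf{old}$, $\mathsf{new}$, $\mathsf{add}$; (3) $d'=R'[u]$. A run over $s\in(\Sigma\times D)^*$ of length $n$ generating $t\in(\Gamma\times D)^*$ is a sequence of $n$ enabled steps from $(q_0,R_0)$ reading $s[i]$ and emitting $t[i]$. $s\otimes t$ is the word with $i$-th letter $(s[i],t[i])$; $[\![\mathcal{S}]\!]=\{s\otimes t:\text{there is a run over }s\text{ generating }t\}$. $\mathcal{S}$ is functional if for every $s\in(\Sigma\times D)^*$ the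 set $\{t : s\otimes t\in[\![\mathcal{S}]\!]\}$ has at most one element. *)

theory Defs
  imports Main "HOL-Library.Nat_Bijection"
begin

datatype recf =
    Zr
  | Sc
  | Pj nat                  (* projection onto the i-th argument (0-based) *)
  | Cn recf "recf list"
  | Pr recf recf
  | Mn recf

inductive rec_eval :: "recf \<Rightarrow> nat list \<Rightarrow> nat \<Rightarrow> bool" where
  zr: "rec_eval Zr xs 0"
| sc: "rec_eval Sc (x # xs) (Suc x)"
| pj: "i < length xs \<Longrightarrow> rec_eval (Pj i) xs (xs ! i)"
| cn: "length ys = length gs \<Longrightarrow> (\<forall>i < length gs. rec_eval (gs ! i) xs (ys ! i))
        \<Longrightarrow> rec_eval f ys z \<Longrightarrow> rec_eval (Cn f gs) xs z"
| pr0: "rec_eval f xs y \<Longrightarrow> rec_eval (Pr f g) (0 # xs) y"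
| prS: "rec_eval (Pr f g) (n # xs) y \<Longrightarrow> rec_eval g (n # y # xs) z
        \<Longrightarrow> rec_eval (Pr f g) (Suc n # xs) z"
| mn: "rec_eval f (n # xs) 0 \<Longrightarrow> (\<forall>m < n. \<exists>y. rec_eval f (m # xs) y \<and> y \<noteq> 0)
        \<Longrightarrow> rec_eval (Mn f) xs n"

text \<open>A program r decides a predicate P on the codes code ` A (promise problem on A)
  if on every input code it halts with 1 for yes-instances and 0 for no-instances.\<close>
definition decides_on :: "recf \<Rightarrow> ('a \<Rightarrow> nat) \<Rightarrow> 'a set \<Rightarrow> ('a \<Rightarrow> bool) \<Rightarrow> bool" where
  "decides_on r code A P \<longleftrightarrow> (\<forall>x\<in>A. rec_eval r [code x] (if P x then 1 else 0))"

datatype cmp = Gt | Eq | Lt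
datatype upd = Old | New | Add

text \<open>Transition (q, sigma, l, m, u, gamma, q'). States and labels are natural numbers;
  registers are indexed 0..k-1 (the paper uses 1..k).\<close>
type_synonym trans = "nat \<times> nat \<times> cmp list \<times> upd list \<times> nat \<times> nat \<times> nat"

record 'd srt =
  states :: "nat list"
  in_labels :: "nat list"
  out_labels :: "nat list"
  init :: nat
  nregs :: nat
  init_regs :: "'d list"
  delta :: "trans list"

definition wf_srt :: "'d srt \<Rightarrow> bool" where
  "wf_srt S \<longleftrightarrow> init S \<in> set (states S) \<and> length (init_regs S) = nregs S \<and>
     (\<forall>(q, \<sigma>, l, m, u, \<gamma>, q') \<in> set (delta S).
        q \<in> set (states S) \<and> q' \<in> set (states S) \<and> \<sigma> \<in> set (in_labels S) \<and>
        \<gamma> \<in> set (out_labels S) \<and> length l = nregs S \<and> length m = nregs S \<and> u < nregs S)"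

fun cmp_sat :: "cmp \<Rightarrow> 'd::linorder \<Rightarrow> 'd \<Rightarrow> bool" where
  "cmp_sat Gt d r = (d > r)"
| "cmp_sat Eq d r = (d = r)"
| "cmp_sat Lt d r = (d < r)"

fun upd_val :: "upd \<Rightarrow> 'd::plus \<Rightarrow> 'd \<Rightarrow> 'd" where
  "upd_val Old r d = r"
| "upd_val New r d = d"
| "upd_val Add r d = r + d"

text \<open>One step (q,R) --(sigma,d)/(gamma,d')--> (q',R').\<close>
definition srt_step :: "('d::{linorder, group_add}) srt \<Rightarrow> nat \<times> 'd list \<Rightarrow> nat \<times> 'd
    \<Rightarrow> nat \<times> 'd \<Rightarrow> nat \<times> 'd list \<Rightarrow> bool" where
  "srt_step S c a b c' \<longleftrightarrow>
     (\<exists>(q, \<sigma>, l, m, u, \<gamma>, q') \<in> set (delta S).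
        fst c = q \<and> fst a = \<sigma> \<and> fst b = \<gamma> \<and> fst c' = q' \<and>
        length (snd c') = nregs S \<and>
        (\<forall>i < nregs S. cmp_sat (l ! i) (snd a) (snd c ! i)) \<and>
        (\<forall>i < nregs S. snd c' ! i = upd_val (m ! i) (snd c ! i) (snd a)) \<and>
        snd b = snd c' ! u)"

inductive srt_runs :: "('d::{linorder, group_add}) srt \<Rightarrow> nat \<times> 'd list
    \<Rightarrow> (nat \<times> 'd) list \<Rightarrow> (nat \<times> 'd) list \<Rightarrow> nat \<times> 'd list \<Rightarrow> bool" for S where
  nil: "srt_runs S c [] [] c"
| cons: "srt_step S c a b c1 \<Longrightarrow> srt_runs S c1 s t c2 \<Longrightarrow> srt_runs S c (a # s) (b # t) c2"

definition srt_generates :: "('d::{linorder, group_add}) srt \<Rightarrow> (nat \<times> 'd) list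
    \<Rightarrow> (nat \<times> 'd) list \<Rightarrow> bool" where
  "srt_generates S s t \<longleftrightarrow> (\<exists>c'. srt_runs S (init S, init_regs S) s t c')"

definition srt_sem :: "('d::{linorder, group_add}) srt \<Rightarrow> ((nat \<times> 'd) \<times> (nat \<times> 'd)) list set" where
  "srt_sem S = {zip s t | s t. length s = length t \<and> srt_generates S s t}"

definition srt_functional :: "('d::{linorder, group_add}) srt \<Rightarrow> bool" where
  "srt_functional S \<longleftrightarrow>
     (\<forall>s t1 t2. length t1 = length s \<and> length t2 = length s \<and>
        zip s t1 \<in> srt_sem S \<and> zip s t2 \<in> srt_sem S \<longrightarrow> t1 = t2)"

fun enc_cmp :: "cmp \<Rightarrow> nat" where
  "enc_cmp Gt = 0" | "enc_cmp Eq = 1" | "enc_cmp Lt = 2"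

fun enc_upd :: "upd \<Rightarrow> nat" where
  "enc_upd Old = 0" | "enc_upd New = 1" | "enc_upd Add = 2"

fun enc_trans :: "trans \<Rightarrow> nat" where
  "enc_trans (q, \<sigma>, l, m, u, \<gamma>, q') =
     list_encode [q, \<sigma>, list_encode (map enc_cmp l), list_encode (map enc_upd m), u, \<gamma>, q']"

definition enc_srt :: "int srt \<Rightarrow> nat" where
  "enc_srt S = list_encode
     [list_encode (states S), list_encode (in_labels S), list_encode (out_labels S),
      init S, nregs S, list_encode (map int_encode (init_regs S)),
      list_encode (map enc_trans (delta S))]"

end

theory Submission
  imports Defs
begin

text \<open>A diagonal argument that needs no universal machine. Partial recursive functions are
  compiled into programs on integer registers (copy, add, equality and less-than guards,
  sequencing, nondeterministic iteration). A program \<open>P\<close> is simulated by an SRT with one state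
  per continuation stack: an instruction is executed by reading a data value that the guard
  forces to equal a register, and after \<open>P\<close> has terminated the SRT may output either of two
  labels, so the SRT is functional iff \<open>P\<close> diverges. Given a decider \<open>r\<close>, let \<open>P\<close> compute the
  function that reads the code of an SRT from seven registers and terminates iff \<open>r\<close> answers
  "functional". Running the simulating SRT with its own code in these registers (all components
  except the initial register contents, whose code is recomputed from the registers) makes it
  functional iff \<open>r\<close> says it is not.\<close>

section \<open>Partial recursive functions\<close>

inductive_cases rec_eval_ZrE: "rec_eval Zr xs y"
inductive_cases rec_eval_ScE: "rec_eval Sc xs y"
inductive_cases rec_eval_PjE: "rec_eval (Pj i) xs y"
inductive_cases rec_eval_CnE: "rec_eval (Cn f gs) xs y"
inductive_cases rec_eval_Pr0E: "rec_eval (Pr f g) (0 # xs) y"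
inductive_cases rec_eval_PrSucE: "rec_eval (Pr f g) (Suc n # xs) y"
inductive_cases rec_eval_PrE: "rec_eval (Pr f g) xs y"
inductive_cases rec_eval_MnE: "rec_eval (Mn f) xs y"

lemma rec_eval_Pj: "i < length xs \<Longrightarrow> xs ! i = y \<Longrightarrow> rec_eval (Pj i) xs y"
  using rec_eval.pj by auto

lemma rec_eval_Cn1: "rec_eval g xs a \<Longrightarrow> rec_eval f [a] z \<Longrightarrow> rec_eval (Cn f [g]) xs z"
  by (rule rec_eval.cn[where ys = "[a]"]) (auto simp: less_Suc_eq)

lemma rec_eval_Cn2:
  "rec_eval g1 xs a \<Longrightarrow> rec_eval g2 xs b \<Longrightarrow> rec_eval f [a, b] z \<Longrightarrow> rec_eval (Cn f [g1, g2]) xs z"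
  by (rule rec_eval.cn[where ys = "[a, b]"]) (auto simp: less_Suc_eq)

lemma rec_eval_deterministic: "rec_eval f xs y \<Longrightarrow> rec_eval f xs y' \<Longrightarrow> y = y'"
proof (induction arbitrary: y' rule: rec_eval.induct)
  case (zr xs)
  from zr.prems show ?case by (rule rec_eval_ZrE) simp
next
  case (sc x xs)
  from sc.prems show ?case by (rule rec_eval_ScE) simp
next
  case (pj i xs)
  from pj.prems show ?case by (rule rec_eval_PjE) simp
next
  case (cn ys gs xs f z)
  from cn.prems obtain ys' where len: "length ys' = length gs"
    and args: "\<forall>i<length gs. rec_eval (gs ! i) xs (ys' ! i)" and "rec_eval f ys' y'"
    by (auto elim: rec_eval_CnE)
  moreover have "ys = ys'"
    by (rule nth_equalityI) (use cn.IH(1) cn.hyps(1) len args in auto)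
  ultimately show ?case using cn.IH(2) by blast
next
  case (pr0 f xs y g)
  from pr0.prems show ?case by (rule rec_eval_Pr0E) (simp add: pr0.IH)
next
  case (prS f g n xs y z)
  from prS.prems show ?case by (rule rec_eval_PrSucE) (use prS.IH in blast)
next
  case (mn f n xs)
  from mn.prems have zero: "rec_eval f (y' # xs) 0"
    and below: "\<forall>m<y'. \<exists>y. rec_eval f (m # xs) y \<and> y \<noteq> 0"
    by (auto elim: rec_eval_MnE)
  show ?case
  proof (cases n y' rule: linorder_cases)
    case less
    with below mn.IH(1) show ?thesis by auto
  next
    case greater
    with mn.IH(2) zero show ?thesis by blast
  qed
qed

lemma rec_eval_Pr_below:
  assumes "rec_eval (Pr f g) (n # xs) y" and "j \<le> n"
  shows "\<exists>v. rec_eval (Pr f g) (j # xs) v"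
  using assms
proof (induction n arbitrary: y)
  case (Suc n)
  then show ?case
    by (cases "j = Suc n") (auto elim: rec_eval_PrSucE)
qed auto

definition rf_add :: recf where
  "rf_add = Pr (Pj 0) (Cn Sc [Pj 1])"

lemma rec_eval_add: "rec_eval rf_add [x, y] (x + y)"
proof (induction x)
  case 0
  then show ?case unfolding rf_add_def by (auto intro!: rec_eval.pr0 rec_eval_Pj)
next
  case (Suc x)
  have "rec_eval (Cn Sc [Pj 1]) [x, x + y, y] (Suc (x + y))"
    by (rule rec_eval_Cn1) (auto intro: rec_eval.sc rec_eval_Pj)
  with Suc show ?case unfolding rf_add_def by (auto intro: rec_eval.prS)
qed

definition rf_triangle :: recf where
  "rf_triangle = Pr Zr (Cn rf_add [Pj 1, Cn Sc [Pj 0]])"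

lemma rec_eval_triangle: "rec_eval rf_triangle [n] (triangle n)"
proof (induction n)
  case 0
  then show ?case unfolding rf_triangle_def by (auto intro!: rec_eval.pr0 rec_eval.zr)
next
  case (Suc n)
  have "rec_eval (Cn Sc [Pj 0]) [n, triangle n] (Suc n)"
    by (rule rec_eval_Cn1) (auto intro: rec_eval.sc rec_eval_Pj)
  then have "rec_eval (Cn rf_add [Pj 1, Cn Sc [Pj 0]]) [n, triangle n] (triangle n + Suc n)"
    by (rule rec_eval_Cn2[OF _ _ rec_eval_add, rotated]) (auto intro: rec_eval_Pj)
  with Suc show ?case unfolding rf_triangle_def by (auto intro: rec_eval.prS)
qed

definition rf_prod_encode :: recf where
  "rf_prod_encode = Cn rf_add [Cn rf_triangle [rf_add], Pj 0]"

lemma rec_eval_prod_encode: "rec_eval rf_prod_encode [m, n] (prod_encode (m, n))"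
  unfolding rf_prod_encode_def prod_encode_def
  by (auto intro!: rec_eval_Cn2 rec_eval_Cn1 rec_eval_add rec_eval_triangle rec_eval_Pj)

definition rf_cons :: "recf \<Rightarrow> recf \<Rightarrow> recf" where
  "rf_cons f g = Cn Sc [Cn rf_prod_encode [f, g]]"

lemma rec_eval_cons:
  "rec_eval f xs x \<Longrightarrow> rec_eval g xs (list_encode ys) \<Longrightarrow> rec_eval (rf_cons f g) xs (list_encode (x # ys))"
  unfolding rf_cons_def by (auto intro!: rec_eval_Cn1 rec_eval_Cn2 rec_eval_prod_encode rec_eval.sc)

fun rf_list :: "recf list \<Rightarrow> recf" where
  "rf_list [] = Zr"
| "rf_list (f # fs) = rf_cons f (rf_list fs)"

lemma rec_eval_list:
  "list_all2 (\<lambda>f y. rec_eval f xs y) fs ys \<Longrightarrow> rec_eval (rf_list fs) xs (list_encode ys)"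
proof (induction fs arbitrary: ys)
  case Nil
  then show ?case by (auto intro: rec_eval.zr)
next
  case (Cons f fs)
  then show ?case by (cases ys) (auto intro: rec_eval_cons[unfolded list_encode.simps])
qed

definition rf_double :: "recf \<Rightarrow> recf" where
  "rf_double f = Cn rf_add [f, f]"

lemma rec_eval_double: "rec_eval f xs x \<Longrightarrow> rec_eval (rf_double f) xs (2 * x)"
  unfolding rf_double_def using rec_eval_add[of x x] by (auto intro!: rec_eval_Cn2 simp: mult_2)

fun rf_prepend_ints :: "nat list \<Rightarrow> nat \<Rightarrow> recf" where
  "rf_prepend_ints [] j = Pj j"
| "rf_prepend_ints (i # is) j = rf_cons (rf_double (Pj i)) (rf_prepend_ints is j)"

lemma rec_eval_prepend_ints:
  assumes "\<forall>i\<in>set is. i < length xs" and "j < length xs"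
  shows "rec_eval (rf_prepend_ints is j) xs
    (list_encode (map (\<lambda>i. int_encode (int (xs ! i))) is @ list_decode (xs ! j)))"
  using assms(1)
proof (induction "is")
  case Nil
  then show ?case using assms(2) by (auto intro: rec_eval_Pj)
next
  case (Cons i "is")
  have "int_encode (int (xs ! i)) = 2 * xs ! i"
    by (simp add: int_encode_def sum_encode_def)
  with Cons show ?case
    by (auto intro!: rec_eval_cons[unfolded list_encode.simps] rec_eval_double rec_eval_Pj)
qed

definition rf_is_zero :: recf where
  "rf_is_zero = Pr (Cn Sc [Zr]) Zr"

lemma rec_eval_is_zero_0: "rec_eval rf_is_zero [0] 1"
  unfolding rf_is_zero_def
  by (rule rec_eval.pr0, rule rec_eval_Cn1[where a = 0])
    (auto intro: rec_eval.zr rec_eval.sc[of 0 "[]", simplified])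

lemma rec_eval_is_zero_Suc: "rec_eval rf_is_zero [Suc n] 0"
proof -
  have "\<exists>y. rec_eval rf_is_zero [n] y"
  proof (induction n)
    case 0
    then show ?case using rec_eval_is_zero_0 by blast
  next
    case (Suc n)
    then show ?case unfolding rf_is_zero_def by (blast intro: rec_eval.prS rec_eval.zr)
  qed
  then show ?thesis unfolding rf_is_zero_def by (blast intro: rec_eval.prS rec_eval.zr)
qed

definition rf_halt_if_nonzero :: recf where
  "rf_halt_if_nonzero = Mn (Cn rf_is_zero [Pj 1])"

lemma rec_eval_halt_if_nonzero: "rec_eval rf_halt_if_nonzero [v] y \<longleftrightarrow> v \<noteq> 0 \<and> y = 0"
proof -
  have test: "rec_eval (Cn rf_is_zero [Pj 1]) [m, v] (if v = 0 then 1 else 0)" for m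
    by (rule rec_eval_Cn1[where a = v], rule rec_eval_Pj, simp, simp)
      (cases v, use rec_eval_is_zero_0 rec_eval_is_zero_Suc in auto)
  show ?thesis
  proof
    assume "rec_eval rf_halt_if_nonzero [v] y"
    then have "rec_eval (Cn rf_is_zero [Pj 1]) [y, v] 0" and "\<forall>m<y. \<exists>w. rec_eval (Cn rf_is_zero [Pj 1]) [m, v] w \<and> w \<noteq> 0"
      unfolding rf_halt_if_nonzero_def by (auto elim: rec_eval_MnE)
    then show "v \<noteq> 0 \<and> y = 0"
      using test rec_eval_deterministic by (metis less_nat_zero_code neq0_conv one_neq_zero)
  next
    assume "v \<noteq> 0 \<and> y = 0"
    then show "rec_eval rf_halt_if_nonzero [v] y"
      unfolding rf_halt_if_nonzero_def using test[of 0] by (auto intro: rec_eval.mn)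
  qed
qed

section \<open>Register programs\<close>

datatype instr = Copy nat nat | Add_to nat nat | Guard_eq nat nat | Guard_lt nat nat

text \<open>\<open>Loop A\<close> executes \<open>A\<close> any number of times; together with the blocking guards this
  nondeterministic iteration expresses while loops.\<close>
datatype prog = Instr instr | Seq prog prog | Loop prog

fun exec_instr :: "instr \<Rightarrow> int list \<Rightarrow> int list \<Rightarrow> bool" where
  "exec_instr (Copy a c) R R' \<longleftrightarrow> R' = R[a := R ! c]"
| "exec_instr (Add_to a c) R R' \<longleftrightarrow> R' = R[a := R ! a + R ! c]"
| "exec_instr (Guard_eq a c) R R' \<longleftrightarrow> R ! a = R ! c \<and> R' = R"
| "exec_instr (Guard_lt a c) R R' \<longleftrightarrow> R ! a < R ! c \<and> R' = R"

inductive exec :: "prog \<Rightarrow> int list \<Rightarrow> int list \<Rightarrow> bool" where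
  Instr: "exec_instr i R R' \<Longrightarrow> exec (Instr i) R R'"
| Seq: "exec A R R1 \<Longrightarrow> exec B R1 R2 \<Longrightarrow> exec (Seq A B) R R2"
| Loop_done: "exec (Loop A) R R"
| Loop_step: "exec A R R1 \<Longrightarrow> exec (Loop A) R1 R2 \<Longrightarrow> exec (Loop A) R R2"

inductive_cases exec_InstrE: "exec (Instr i) R R'"
inductive_cases exec_SeqE: "exec (Seq A B) R R'"

lemma exec_Instr_iff [simp]: "exec (Instr i) R R' \<longleftrightarrow> exec_instr i R R'"
  by (auto elim: exec_InstrE intro: exec.Instr)

lemma exec_Seq_iff [simp]: "exec (Seq A B) R R' \<longleftrightarrow> (\<exists>R1. exec A R R1 \<and> exec B R1 R')"
  by (auto elim: exec_SeqE intro: exec.Seq)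

lemma exec_Loop_snoc: "exec (Loop A) R R1 \<Longrightarrow> exec A R1 R2 \<Longrightarrow> exec (Loop A) R R2"
  by (induction "Loop A" R R1 rule: exec.induct) (auto intro: exec.intros)

lemma exec_Loop_invariant:
  "exec (Loop A) R R' \<Longrightarrow> Inv R \<Longrightarrow> (\<And>R R'. Inv R \<Longrightarrow> exec A R R' \<Longrightarrow> Inv R') \<Longrightarrow> Inv R'"
  by (induction "Loop A" R R' rule: exec.induct) blast+

lemma exec_instr_length: "exec_instr i R R' \<Longrightarrow> length R' = length R"
  by (cases i) auto

inductive small_step :: "prog list \<times> int list \<Rightarrow> prog list \<times> int list \<Rightarrow> bool" where
  Instr: "exec_instr i R R' \<Longrightarrow> small_step (Instr i # K, R) (K, R')"
| Seq: "small_step (Seq A B # K, R) (A # B # K, R)"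
| Loop_done: "small_step (Loop A # K, R) (K, R)"
| Loop_step: "small_step (Loop A # K, R) (A # Loop A # K, R)"

lemma small_step_length: "small_step (K, R) (K', R') \<Longrightarrow> length R' = length R"
  by (auto elim: small_step.cases dest: exec_instr_length)

lemma exec_small_steps: "exec P R R' \<Longrightarrow> small_step\<^sup>*\<^sup>* (P # K, R) (K, R')"
proof (induction arbitrary: K rule: exec.induct)
  case (Instr i R R')
  then show ?case by (auto intro: small_step.Instr)
next
  case (Seq A R R1 B R2)
  then show ?case
    by (meson small_step.Seq converse_rtranclp_into_rtranclp rtranclp_trans)
next
  case (Loop_done A R)
  then show ?case by (auto intro: small_step.Loop_done)
next
  case (Loop_step A R R1 R2)
  then show ?case
    by (meson small_step.Loop_step converse_rtranclp_into_rtranclp rtranclp_trans)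
qed

fun exec_stack :: "prog list \<Rightarrow> int list \<Rightarrow> int list \<Rightarrow> bool" where
  "exec_stack [] R R' \<longleftrightarrow> R = R'"
| "exec_stack (P # K) R R' \<longleftrightarrow> (\<exists>R1. exec P R R1 \<and> exec_stack K R1 R')"

lemma small_steps_exec_stack: "small_step\<^sup>*\<^sup>* c ([], R') \<Longrightarrow> exec_stack (fst c) (snd c) R'"
proof (induction rule: converse_rtranclp_induct)
  case (step c c1)
  from step.hyps(1) step.IH show ?case
    by (cases rule: small_step.cases) (auto intro: exec.intros)
qed simp

lemma exec_iff_small_steps: "(\<exists>R'. exec P R R') \<longleftrightarrow> (\<exists>R'. small_step\<^sup>*\<^sup>* ([P], R) ([], R'))"
  using exec_small_steps[of P R _ "[]"] small_steps_exec_stack[of "([P], R)"] by auto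

text \<open>The finitely many stacks that can occur when running \<open>P\<close> from \<open>[P]\<close>.\<close>
fun stacks :: "prog \<Rightarrow> prog list set" where
  "stacks (Instr i) = {[Instr i], []}"
| "stacks (Seq A B) = {[Seq A B]} \<union> (\<lambda>K. K @ [B]) ` stacks A \<union> stacks B"
| "stacks (Loop A) = {[Loop A], []} \<union> (\<lambda>K. K @ [Loop A]) ` stacks A"

lemma finite_stacks: "finite (stacks P)"
  by (induction P) auto

lemma singleton_in_stacks: "[P] \<in> stacks P"
  by (cases P) auto

lemma Nil_in_stacks: "[] \<in> stacks P"
  by (induction P) auto

lemma small_step_append:
  "small_step (K @ M, R) (K', R') \<Longrightarrow> K \<noteq> [] \<Longrightarrow> \<exists>K0. K' = K0 @ M \<and> small_step (K, R) (K0, R')"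
  by (cases K) (auto elim!: small_step.cases intro: small_step.intros)

lemma stacks_closed: "K \<in> stacks P \<Longrightarrow> small_step (K, R) (K', R') \<Longrightarrow> K' \<in> stacks P"
proof (induction P arbitrary: K K' R R')
  case (Instr i)
  then show ?case by (auto elim: small_step.cases)
next
  case (Seq A B)
  from Seq.prems(1) consider "K = [Seq A B]" | K0 where "K = K0 @ [B]" "K0 \<in> stacks A" | "K \<in> stacks B"
    by auto
  then show ?case
  proof cases
    case 1
    with Seq.prems(2) show ?thesis
      by (auto elim!: small_step.cases intro!: image_eqI[where x = "[A]"] simp: singleton_in_stacks)
  next
    case (2 K0)
    show ?thesis
    proof (cases "K0 = []")
      case True
      with 2 Seq.IH(2)[OF singleton_in_stacks] Seq.prems(2) show ?thesis by auto
    next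
      case False
      with 2 Seq.IH(1) Seq.prems(2) show ?thesis by (auto dest: small_step_append)
    qed
  next
    case 3
    with Seq.IH(2) Seq.prems(2) show ?thesis by auto
  qed
next
  case (Loop A)
  from Loop.prems(1) consider "K = [Loop A]" | "K = []"
    | K0 where "K = K0 @ [Loop A]" "K0 \<in> stacks A" "K0 \<noteq> []"
    by auto
  then show ?case
  proof cases
    case 1
    with Loop.prems(2) show ?thesis
      by (auto elim!: small_step.cases intro!: image_eqI[where x = "[A]"] simp: singleton_in_stacks)
  next
    case 2
    with Loop.prems(2) show ?thesis by (auto elim: small_step.cases)
  next
    case 3
    with Loop.IH Loop.prems(2) show ?thesis by (auto dest: small_step_append)
  qed
qed

text \<open>Register 0 is never written: it becomes the output register of the simulating SRT.\<close>
fun instr_ok :: "nat \<Rightarrow> instr \<Rightarrow> bool" where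
  "instr_ok k (Copy a c) \<longleftrightarrow> 0 < a \<and> a < k \<and> c < k"
| "instr_ok k (Add_to a c) \<longleftrightarrow> 0 < a \<and> a < k \<and> c < k"
| "instr_ok k (Guard_eq a c) \<longleftrightarrow> a < k \<and> c < k"
| "instr_ok k (Guard_lt a c) \<longleftrightarrow> a < k \<and> c < k"

fun prog_ok :: "nat \<Rightarrow> prog \<Rightarrow> bool" where
  "prog_ok k (Instr i) \<longleftrightarrow> instr_ok k i"
| "prog_ok k (Seq A B) \<longleftrightarrow> prog_ok k A \<and> prog_ok k B"
| "prog_ok k (Loop A) \<longleftrightarrow> prog_ok k A"

lemma prog_ok_stacks: "K \<in> stacks P \<Longrightarrow> prog_ok k P \<Longrightarrow> Q \<in> set K \<Longrightarrow> prog_ok k Q"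
  by (induction P arbitrary: K) auto

section \<open>Compiling recursive functions to register programs\<close>

definition zero_reg :: nat where "zero_reg = 7"
definition one_reg :: nat where "one_reg = 8"

lemma zero_reg_neq_one_reg [simp]: "zero_reg \<noteq> one_reg" "one_reg \<noteq> zero_reg"
  by (auto simp: zero_reg_def one_reg_def)

definition prog_abort :: prog where "prog_abort = Instr (Guard_lt zero_reg zero_reg)"
definition prog_skip :: prog where "prog_skip = Instr (Guard_eq zero_reg zero_reg)"

lemma exec_abort [simp]: "\<not> exec prog_abort R R'"
  by (simp add: prog_abort_def)

lemma exec_skip [simp]: "exec prog_skip R R' \<longleftrightarrow> R' = R"
  by (auto simp: prog_skip_def)

definition pr_body :: "prog \<Rightarrow> nat \<Rightarrow> nat \<Rightarrow> prog" where
  "pr_body G b n = Seq (Instr (Guard_lt b n))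
     (Seq G (Seq (Instr (Copy (b + 1) (b + 2))) (Instr (Add_to b one_reg))))"

definition mn_body :: "prog \<Rightarrow> nat \<Rightarrow> prog" where
  "mn_body F b = Seq F (Seq (Instr (Guard_lt zero_reg (b + 1))) (Instr (Add_to b one_reg)))"

text \<open>\<open>compile f ins out b\<close> computes \<open>f\<close> on the registers \<open>ins\<close> into register \<open>out\<close>, using the
  registers from \<open>b\<close> to \<open>b + scratch f\<close> as workspace and \<open>zero_reg\<close>, \<open>one_reg\<close> as the
  constants \<open>0\<close> and \<open>1\<close>. The loops for \<open>Pr\<close> and \<open>Mn\<close> count in register \<open>b\<close> and keep the
  current value of the recursion, resp. of the tested function, in register \<open>b + 1\<close>.\<close>
fun compile :: "recf \<Rightarrow> nat list \<Rightarrow> nat \<Rightarrow> nat \<Rightarrow> prog"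
  and compile_list :: "recf list \<Rightarrow> nat list \<Rightarrow> nat \<Rightarrow> nat \<Rightarrow> prog" where
  "compile Zr ins out b = Instr (Copy out zero_reg)"
| "compile Sc ins out b =
     (case ins of [] \<Rightarrow> prog_abort | x # _ \<Rightarrow> Seq (Instr (Copy out x)) (Instr (Add_to out one_reg)))"
| "compile (Pj i) ins out b = (if i < length ins then Instr (Copy out (ins ! i)) else prog_abort)"
| "compile (Cn f gs) ins out b =
     Seq (compile_list gs ins b (b + length gs)) (compile f [b..<b + length gs] out (b + length gs))"
| "compile (Pr f g) ins out b = (case ins of [] \<Rightarrow> prog_abort | n # xs \<Rightarrow>
     Seq (Instr (Copy b zero_reg)) (Seq (compile f xs (b + 1) (b + 3))
      (Seq (Loop (pr_body (compile g (b # (b + 1) # xs) (b + 2) (b + 3)) b n))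
       (Seq (Instr (Guard_eq b n)) (Instr (Copy out (b + 1)))))))"
| "compile (Mn f) ins out b =
     Seq (Instr (Copy b zero_reg))
      (Seq (Loop (mn_body (compile f (b # ins) (b + 1) (b + 2)) b))
       (Seq (compile f (b # ins) (b + 1) (b + 2))
        (Seq (Instr (Guard_eq (b + 1) zero_reg)) (Instr (Copy out b)))))"
| "compile_list [] ins p s = prog_skip"
| "compile_list (g # gs) ins p s = Seq (compile g ins p s) (compile_list gs ins (Suc p) s)"

fun scratch :: "recf \<Rightarrow> nat" and scratch_list :: "recf list \<Rightarrow> nat" where
  "scratch Zr = 0"
| "scratch Sc = 0"
| "scratch (Pj i) = 0"
| "scratch (Cn f gs) = length gs + max (scratch f) (scratch_list gs)"
| "scratch (Pr f g) = 3 + max (scratch f) (scratch g)"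
| "scratch (Mn f) = 2 + scratch f"
| "scratch_list [] = 0"
| "scratch_list (g # gs) = max (scratch g) (scratch_list gs)"

abbreviation reg_vals :: "int list \<Rightarrow> nat list \<Rightarrow> nat list" where
  "reg_vals R xs \<equiv> map (\<lambda>x. nat (R ! x)) xs"

definition regs_ready :: "nat list \<Rightarrow> nat \<Rightarrow> int list \<Rightarrow> bool" where
  "regs_ready ins b R \<longleftrightarrow> (\<forall>x\<in>set ins. x < b \<and> 0 \<le> R ! x) \<and> zero_reg < b \<and> one_reg < b
     \<and> R ! zero_reg = 0 \<and> R ! one_reg = 1"

definition compile_pre :: "nat list \<Rightarrow> nat \<Rightarrow> nat \<Rightarrow> int list \<Rightarrow> bool" where
  "compile_pre ins out b R \<longleftrightarrow> regs_ready ins b R \<and> out < b \<and> out \<noteq> zero_reg \<and> out \<noteq> one_reg"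

lemma compile_preD:
  assumes "compile_pre ins out b R"
  shows "\<forall>x\<in>set ins. x < b \<and> 0 \<le> R ! x" "out < b" "out \<noteq> zero_reg" "out \<noteq> one_reg"
    "zero_reg < b" "one_reg < b" "R ! zero_reg = 0" "R ! one_reg = 1"
  using assms by (auto simp: compile_pre_def regs_ready_def)

text \<open>The registers after \<open>j\<close> rounds of the loop compiled for \<open>Pr\<close>, resp. \<open>Mn\<close>.\<close>
definition pr_state :: "recf \<Rightarrow> nat \<Rightarrow> nat list \<Rightarrow> int list \<Rightarrow> nat \<Rightarrow> int list \<Rightarrow> bool" where
  "pr_state h b xs R j R' \<longleftrightarrow> length R' = length R \<and> (\<forall>x<b. R' ! x = R ! x) \<and> R' ! b = int j
     \<and> 0 \<le> R' ! (b + 1) \<and> rec_eval h (j # reg_vals R xs) (nat (R' ! (b + 1)))"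

definition mn_state :: "recf \<Rightarrow> nat \<Rightarrow> nat list \<Rightarrow> int list \<Rightarrow> nat \<Rightarrow> int list \<Rightarrow> bool" where
  "mn_state f b ins R j R' \<longleftrightarrow> length R' = length R \<and> (\<forall>x<b. R' ! x = R ! x) \<and> R' ! b = int j
     \<and> (\<forall>m<j. \<exists>y. rec_eval f (m # reg_vals R ins) y \<and> y \<noteq> 0)"

definition compile_sound :: "recf \<Rightarrow> bool" where
  "compile_sound f \<longleftrightarrow> (\<forall>ins out b R R'. exec (compile f ins out b) R R' \<longrightarrow> compile_pre ins out b R
     \<longrightarrow> b + scratch f \<le> length R \<longrightarrow> length R' = length R \<and> 0 \<le> R' ! out
       \<and> rec_eval f (reg_vals R ins) (nat (R' ! out)) \<and> (\<forall>x<b. x \<noteq> out \<longrightarrow> R' ! x = R ! x))"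

lemma compile_soundD:
  "compile_sound f \<Longrightarrow> exec (compile f ins out b) R R' \<Longrightarrow> compile_pre ins out b R
    \<Longrightarrow> b + scratch f \<le> length R \<Longrightarrow> length R' = length R \<and> 0 \<le> R' ! out
      \<and> rec_eval f (reg_vals R ins) (nat (R' ! out)) \<and> (\<forall>x<b. x \<noteq> out \<longrightarrow> R' ! x = R ! x)"
  unfolding compile_sound_def by blast

lemma compile_sound_Zr: "compile_sound Zr"
  unfolding compile_sound_def by (auto simp: compile_pre_def regs_ready_def intro: rec_eval.zr)

lemma compile_sound_Sc: "compile_sound Sc"
  unfolding compile_sound_def
proof (intro allI impI)
  fix ins out b R R'
  assume exec: "exec (compile Sc ins out b) R R'" and pre: "compile_pre ins out b R"
    and len: "b + scratch Sc \<le> length R"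
  then obtain x xs where ins: "ins = x # xs" by (cases ins) auto
  with exec have R': "R' = R[out := R ! x + R ! one_reg]"
    using len compile_preD(2,4)[OF pre] by simp
  have "x < b" "0 \<le> R ! x" using compile_preD(1)[OF pre] ins by auto
  then show "length R' = length R \<and> 0 \<le> R' ! out \<and> rec_eval Sc (reg_vals R ins) (nat (R' ! out))
      \<and> (\<forall>y<b. y \<noteq> out \<longrightarrow> R' ! y = R ! y)"
    using compile_preD[OF pre] len ins R' rec_eval.sc[of "nat (R ! x)"]
    by (simp add: nat_add_distrib)
qed

lemma compile_sound_Pj: "compile_sound (Pj i)"
  unfolding compile_sound_def
proof (intro allI impI)
  fix ins out b R R'
  assume exec: "exec (compile (Pj i) ins out b) R R'" and pre: "compile_pre ins out b R"
    and len: "b + scratch (Pj i) \<le> length R"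
  then have i: "i < length ins" by (cases "i < length ins") auto
  with exec have R': "R' = R[out := R ! (ins ! i)]" by simp
  have "ins ! i < b" "0 \<le> R ! (ins ! i)" using compile_preD(1)[OF pre] i by auto
  with R' i len compile_preD(2)[OF pre] show "length R' = length R \<and> 0 \<le> R' ! out
      \<and> rec_eval (Pj i) (reg_vals R ins) (nat (R' ! out)) \<and> (\<forall>y<b. y \<noteq> out \<longrightarrow> R' ! y = R ! y)"
    by (auto intro: rec_eval_Pj)
qed

lemma compile_list_sound:
  assumes "\<forall>g\<in>set gs. compile_sound g" and "exec (compile_list gs ins p s) R R'"
    and "regs_ready ins p R" and "p + length gs \<le> s" and "s + scratch_list gs \<le> length R"
  shows "length R' = length R \<and> (\<forall>x<p. R' ! x = R ! x)
    \<and> (\<forall>j<length gs. 0 \<le> R' ! (p + j) \<and> rec_eval (gs ! j) (reg_vals R ins) (nat (R' ! (p + j))))"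
  using assms
proof (induction gs arbitrary: p R R')
  case Nil
  then show ?case by simp
next
  case (Cons g gs)
  from Cons.prems(2) obtain R1 where exec_g: "exec (compile g ins p s) R R1"
    and exec_gs: "exec (compile_list gs ins (Suc p) s) R1 R'" by auto
  have "compile_pre ins p s R"
    using Cons.prems(3,4) by (auto simp: compile_pre_def regs_ready_def)
  with Cons.prems exec_g have g: "length R1 = length R" "0 \<le> R1 ! p"
    "rec_eval g (reg_vals R ins) (nat (R1 ! p))" "\<forall>x<s. x \<noteq> p \<longrightarrow> R1 ! x = R ! x"
    using compile_soundD[of g] by auto
  have same_ins: "reg_vals R1 ins = reg_vals R ins"
    using g(4) Cons.prems(3,4) by (auto simp: regs_ready_def)
  have "regs_ready ins (Suc p) R1"
    using Cons.prems(3,4) g by (auto simp: regs_ready_def)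
  with Cons.IH[OF _ exec_gs] Cons.prems g(1) have gs: "length R' = length R1" "\<forall>x<Suc p. R' ! x = R1 ! x"
    "\<forall>j<length gs. 0 \<le> R' ! (Suc p + j) \<and> rec_eval (gs ! j) (reg_vals R ins) (nat (R' ! (Suc p + j)))"
    unfolding same_ins by auto
  have "\<forall>j<length (g # gs). 0 \<le> R' ! (p + j) \<and> rec_eval ((g # gs) ! j) (reg_vals R ins) (nat (R' ! (p + j)))"
  proof (intro allI impI)
    fix j assume "j < length (g # gs)"
    with g gs show "0 \<le> R' ! (p + j) \<and> rec_eval ((g # gs) ! j) (reg_vals R ins) (nat (R' ! (p + j)))"
      by (cases j) auto
  qed
  with g gs Cons.prems(4) show ?case by simp
qed

lemma compile_sound_Cn:
  assumes f: "compile_sound f" and gs: "\<forall>g\<in>set gs. compile_sound g"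
  shows "compile_sound (Cn f gs)"
  unfolding compile_sound_def
proof (intro allI impI)
  fix ins out b R R'
  assume exec: "exec (compile (Cn f gs) ins out b) R R'" and pre: "compile_pre ins out b R"
    and len: "b + scratch (Cn f gs) \<le> length R"
  define s where "s = b + length gs"
  from exec obtain R1 where exec_gs: "exec (compile_list gs ins b s) R R1"
    and exec_f: "exec (compile f [b..<s] out s) R1 R'" by (auto simp: s_def)
  have "regs_ready ins b R" using pre by (simp add: compile_pre_def)
  with compile_list_sound[OF gs exec_gs] len have args: "length R1 = length R" "\<forall>x<b. R1 ! x = R ! x"
    "\<forall>j<length gs. 0 \<le> R1 ! (b + j) \<and> rec_eval (gs ! j) (reg_vals R ins) (nat (R1 ! (b + j)))"
    by (auto simp: s_def)
  have "\<forall>x\<in>set [b..<s]. 0 \<le> R1 ! x"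
    using args(3) by (auto simp: s_def) (metis add_less_cancel_left le_add_diff_inverse)
  then have "compile_pre [b..<s] out s R1"
    using pre args(2) by (auto simp: compile_pre_def regs_ready_def s_def)
  with compile_soundD[OF f exec_f] len args(1) have res: "length R' = length R1" "0 \<le> R' ! out"
    "rec_eval f (reg_vals R1 [b..<s]) (nat (R' ! out))" "\<forall>x<s. x \<noteq> out \<longrightarrow> R' ! x = R1 ! x"
    by (auto simp: s_def)
  have "rec_eval (Cn f gs) (reg_vals R ins) (nat (R' ! out))"
    by (rule rec_eval.cn[where ys = "reg_vals R1 [b..<s]"]) (use args(3) res(3) in \<open>auto simp: s_def\<close>)
  with res args show "length R' = length R \<and> 0 \<le> R' ! out
      \<and> rec_eval (Cn f gs) (reg_vals R ins) (nat (R' ! out)) \<and> (\<forall>x<b. x \<noteq> out \<longrightarrow> R' ! x = R ! x)"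
    by (simp add: s_def)
qed

lemma pr_body_sound:
  assumes g: "compile_sound g" and pre: "compile_pre (n # xs) out b R"
    and len: "b + scratch (Pr f g) \<le> length R" and Ra: "pr_state (Pr f g) b xs R j Ra"
    and exec: "exec (pr_body (compile g (b # (b + 1) # xs) (b + 2) (b + 3)) b n) Ra Rb"
  shows "pr_state (Pr f g) b xs R (Suc j) Rb"
proof -
  note P = compile_preD[OF pre]
  from exec obtain Rc Rd where exec_g: "exec (compile g (b # (b + 1) # xs) (b + 2) (b + 3)) Ra Rc"
    and Rd: "Rd = Rc[b + 1 := Rc ! (b + 2)]" and Rb: "Rb = Rd[b := Rd ! b + Rd ! one_reg]"
    by (auto simp: pr_body_def)
  have "compile_pre (b # (b + 1) # xs) (b + 2) (b + 3) Ra"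
    using Ra P by (auto simp: pr_state_def compile_pre_def regs_ready_def)
  with compile_soundD[OF g exec_g] len Ra have Rc: "length Rc = length R" "0 \<le> Rc ! (b + 2)"
    "rec_eval g (reg_vals Ra (b # (b + 1) # xs)) (nat (Rc ! (b + 2)))"
    "\<forall>x<b + 3. x \<noteq> b + 2 \<longrightarrow> Rc ! x = Ra ! x"
    by (auto simp: pr_state_def)
  have args: "reg_vals Ra (b # (b + 1) # xs) = j # nat (Ra ! (b + 1)) # reg_vals R xs"
    using Ra P by (auto simp: pr_state_def)
  have "rec_eval (Pr f g) (Suc j # reg_vals R xs) (nat (Rc ! (b + 2)))"
    using rec_eval.prS[OF _ Rc(3)[unfolded args]] Ra by (simp add: pr_state_def)
  with Rc Ra P len show ?thesis
    unfolding pr_state_def Rb Rd by auto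
qed

lemma compile_sound_Pr:
  assumes f: "compile_sound f" and g: "compile_sound g"
  shows "compile_sound (Pr f g)"
  unfolding compile_sound_def
proof (intro allI impI)
  fix ins out b R R'
  assume exec: "exec (compile (Pr f g) ins out b) R R'" and pre: "compile_pre ins out b R"
    and len: "b + scratch (Pr f g) \<le> length R"
  then obtain n xs where ins: "ins = n # xs" by (cases ins) auto
  note P = compile_preD[OF pre]
  let ?G = "compile g (b # (b + 1) # xs) (b + 2) (b + 3)"
  from exec ins obtain R2 R3 where exec_f: "exec (compile f xs (b + 1) (b + 3)) (R[b := R ! zero_reg]) R2"
    and loop: "exec (Loop (pr_body ?G b n)) R2 R3" and stop: "R3 ! b = R3 ! n"
    and R': "R' = R3[out := R3 ! (b + 1)]"
    by auto
  have "compile_pre xs (b + 1) (b + 3) (R[b := R ! zero_reg])"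
    using P ins by (auto simp: compile_pre_def regs_ready_def)
  with compile_soundD[OF f exec_f] len have R2: "length R2 = length R" "0 \<le> R2 ! (b + 1)"
    "rec_eval f (reg_vals (R[b := R ! zero_reg]) xs) (nat (R2 ! (b + 1)))"
    "\<forall>x<b + 3. x \<noteq> b + 1 \<longrightarrow> R2 ! x = R[b := R ! zero_reg] ! x"
    by auto
  have "reg_vals (R[b := R ! zero_reg]) xs = reg_vals R xs" using P ins by auto
  with R2(3) have "rec_eval (Pr f g) (0 # reg_vals R xs) (nat (R2 ! (b + 1)))"
    by (auto intro: rec_eval.pr0)
  with R2 P len have "pr_state (Pr f g) b xs R 0 R2"
    by (auto simp: pr_state_def)
  then have "\<exists>j. pr_state (Pr f g) b xs R j R3"
    using exec_Loop_invariant[OF loop, where Inv = "\<lambda>R0. \<exists>j. pr_state (Pr f g) b xs R j R0"]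
      pr_body_sound[OF g pre[unfolded ins] len]
    by blast
  then obtain j where R3: "pr_state (Pr f g) b xs R j R3" ..
  moreover have "R3 ! n = R ! n" using R3 P ins by (simp add: pr_state_def)
  ultimately have "j = nat (R ! n)" using stop by (simp add: pr_state_def)
  with R3 R' P len ins show "length R' = length R \<and> 0 \<le> R' ! out
      \<and> rec_eval (Pr f g) (reg_vals R ins) (nat (R' ! out)) \<and> (\<forall>x<b. x \<noteq> out \<longrightarrow> R' ! x = R ! x)"
    by (simp add: pr_state_def)
qed

lemma mn_test_sound:
  assumes f: "compile_sound f" and pre: "compile_pre ins out b R"
    and len: "b + scratch (Mn f) \<le> length R" and Ra: "mn_state f b ins R j Ra"
    and exec: "exec (compile f (b # ins) (b + 1) (b + 2)) Ra Rc"
  shows "length Rc = length R \<and> (\<forall>x<b + 2. x \<noteq> b + 1 \<longrightarrow> Rc ! x = Ra ! x) \<and> 0 \<le> Rc ! (b + 1)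
    \<and> rec_eval f (j # reg_vals R ins) (nat (Rc ! (b + 1)))"
proof -
  note P = compile_preD[OF pre]
  have "compile_pre (b # ins) (b + 1) (b + 2) Ra" and args: "reg_vals Ra (b # ins) = j # reg_vals R ins"
    using P Ra by (auto simp: mn_state_def compile_pre_def regs_ready_def)
  with compile_soundD[OF f exec] len Ra show ?thesis
    unfolding args by (auto simp: mn_state_def)
qed

lemma mn_body_sound:
  assumes f: "compile_sound f" and pre: "compile_pre ins out b R"
    and len: "b + scratch (Mn f) \<le> length R" and Ra: "mn_state f b ins R j Ra"
    and exec: "exec (mn_body (compile f (b # ins) (b + 1) (b + 2)) b) Ra Rb"
  shows "mn_state f b ins R (Suc j) Rb"
proof -
  note P = compile_preD[OF pre]
  from exec obtain Rc where exec_f: "exec (compile f (b # ins) (b + 1) (b + 2)) Ra Rc"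
    and nonzero: "Rc ! zero_reg < Rc ! (b + 1)" and Rb: "Rb = Rc[b := Rc ! b + Rc ! one_reg]"
    by (auto simp: mn_body_def)
  note Rc = mn_test_sound[OF f pre len Ra exec_f]
  with Ra nonzero P have "\<forall>m<Suc j. \<exists>y. rec_eval f (m # reg_vals R ins) y \<and> y \<noteq> 0"
    by (auto simp: mn_state_def less_Suc_eq)
  with Rc Ra P len show ?thesis
    unfolding mn_state_def Rb by auto
qed

lemma compile_sound_Mn:
  assumes f: "compile_sound f"
  shows "compile_sound (Mn f)"
  unfolding compile_sound_def
proof (intro allI impI)
  fix ins out b R R'
  assume exec: "exec (compile (Mn f) ins out b) R R'" and pre: "compile_pre ins out b R"
    and len: "b + scratch (Mn f) \<le> length R"
  note P = compile_preD[OF pre]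
  let ?F = "compile f (b # ins) (b + 1) (b + 2)"
  from exec obtain R2 R3 where loop: "exec (Loop (mn_body ?F b)) (R[b := R ! zero_reg]) R2"
    and exec_f: "exec ?F R2 R3" and found: "R3 ! (b + 1) = R3 ! zero_reg"
    and R': "R' = R3[out := R3 ! b]"
    by auto
  have "mn_state f b ins R 0 (R[b := R ! zero_reg])"
    using P len by (auto simp: mn_state_def)
  then have "\<exists>j. mn_state f b ins R j R2"
    using exec_Loop_invariant[OF loop, where Inv = "\<lambda>R0. \<exists>j. mn_state f b ins R j R0"]
      mn_body_sound[OF f pre len]
    by blast
  then obtain j where R2: "mn_state f b ins R j R2" ..
  note R3 = mn_test_sound[OF f pre len R2 exec_f]
  with R2 found P have "rec_eval f (j # reg_vals R ins) 0" by (auto simp: mn_state_def)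
  with R2 have "rec_eval (Mn f) (reg_vals R ins) j"
    by (auto simp: mn_state_def intro: rec_eval.mn)
  with R3 R2 R' P len show "length R' = length R \<and> 0 \<le> R' ! out
      \<and> rec_eval (Mn f) (reg_vals R ins) (nat (R' ! out)) \<and> (\<forall>x<b. x \<noteq> out \<longrightarrow> R' ! x = R ! x)"
    by (simp add: mn_state_def)
qed

lemma compile_sound: "compile_sound f"
proof (induction f)
  case (Cn f gs)
  then show ?case by (simp add: compile_sound_Cn)
qed (simp_all add: compile_sound_Zr compile_sound_Sc compile_sound_Pj compile_sound_Pr compile_sound_Mn)

definition compile_complete :: "recf \<Rightarrow> bool" where
  "compile_complete f \<longleftrightarrow> (\<forall>ins out b R y. rec_eval f (reg_vals R ins) y \<longrightarrow> compile_pre ins out b R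
     \<longrightarrow> b + scratch f \<le> length R \<longrightarrow> (\<exists>R'. exec (compile f ins out b) R R' \<and> length R' = length R
       \<and> R' ! out = int y \<and> (\<forall>x<b. x \<noteq> out \<longrightarrow> R' ! x = R ! x)))"

lemma compile_completeD:
  "compile_complete f \<Longrightarrow> rec_eval f (reg_vals R ins) y \<Longrightarrow> compile_pre ins out b R
    \<Longrightarrow> b + scratch f \<le> length R \<Longrightarrow> \<exists>R'. exec (compile f ins out b) R R' \<and> length R' = length R
      \<and> R' ! out = int y \<and> (\<forall>x<b. x \<noteq> out \<longrightarrow> R' ! x = R ! x)"
  unfolding compile_complete_def by blast

lemma compile_complete_Zr: "compile_complete Zr"
  unfolding compile_complete_def by (auto simp: compile_pre_def regs_ready_def elim: rec_eval_ZrE)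

lemma compile_complete_Sc: "compile_complete Sc"
  unfolding compile_complete_def
proof (intro allI impI)
  fix ins out b R y
  assume eval: "rec_eval Sc (reg_vals R ins) y" and pre: "compile_pre ins out b R"
    and len: "b + scratch Sc \<le> length R"
  then obtain x xs where ins: "ins = x # xs" and y: "y = Suc (nat (R ! x))"
    by (cases ins) (auto elim: rec_eval_ScE)
  note P = compile_preD[OF pre]
  have "0 \<le> R ! x" using P(1) ins by auto
  with P len ins y show "\<exists>R'. exec (compile Sc ins out b) R R' \<and> length R' = length R
      \<and> R' ! out = int y \<and> (\<forall>x<b. x \<noteq> out \<longrightarrow> R' ! x = R ! x)"
    by (auto intro!: exI[of _ "R[out := R ! x + 1]"])
qed

lemma compile_complete_Pj: "compile_complete (Pj i)"
  unfolding compile_complete_def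
proof (intro allI impI)
  fix ins out b R y
  assume eval: "rec_eval (Pj i) (reg_vals R ins) y" and pre: "compile_pre ins out b R"
    and len: "b + scratch (Pj i) \<le> length R"
  then have i: "i < length ins" and y: "y = nat (R ! (ins ! i))" by (auto elim: rec_eval_PjE)
  note P = compile_preD[OF pre]
  have "0 \<le> R ! (ins ! i)" using P(1) i by auto
  with P len i y show "\<exists>R'. exec (compile (Pj i) ins out b) R R' \<and> length R' = length R
      \<and> R' ! out = int y \<and> (\<forall>x<b. x \<noteq> out \<longrightarrow> R' ! x = R ! x)"
    by (auto intro!: exI[of _ "R[out := R ! (ins ! i)]"])
qed

lemma compile_list_complete:
  assumes "\<forall>g\<in>set gs. compile_complete g"
    and "length ys = length gs" and "\<forall>j<length gs. rec_eval (gs ! j) (reg_vals R ins) (ys ! j)"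
    and "regs_ready ins p R" and "p + length gs \<le> s" and "s + scratch_list gs \<le> length R"
  shows "\<exists>R'. exec (compile_list gs ins p s) R R' \<and> length R' = length R \<and> (\<forall>x<p. R' ! x = R ! x)
    \<and> (\<forall>j<length gs. R' ! (p + j) = int (ys ! j))"
  using assms
proof (induction gs arbitrary: ys p R)
  case Nil
  then show ?case by simp
next
  case (Cons g gs)
  then obtain y ys' where ys: "ys = y # ys'" by (cases ys) auto
  have "compile_pre ins p s R"
    using Cons.prems(4,5) by (auto simp: compile_pre_def regs_ready_def)
  moreover have "rec_eval g (reg_vals R ins) y"
    using Cons.prems(3) ys by fastforce
  ultimately obtain R1 where exec_g: "exec (compile g ins p s) R R1"
    and R1: "length R1 = length R" "R1 ! p = int y" "\<forall>x<s. x \<noteq> p \<longrightarrow> R1 ! x = R ! x"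
    using compile_completeD[of g] Cons.prems(1,6) by fastforce
  have same_ins: "reg_vals R1 ins = reg_vals R ins"
    using R1(3) Cons.prems(4,5) by (auto simp: regs_ready_def)
  have "regs_ready ins (Suc p) R1"
    using Cons.prems(4,5) R1 by (auto simp: regs_ready_def)
  moreover have "\<forall>j<length gs. rec_eval (gs ! j) (reg_vals R1 ins) (ys' ! j)"
    using Cons.prems(3) unfolding same_ins ys by fastforce
  moreover have "s + scratch_list gs \<le> length R1" "length ys' = length gs"
    using Cons.prems(2,6) R1(1) ys by auto
  ultimately obtain R' where exec_gs: "exec (compile_list gs ins (Suc p) s) R1 R'"
    and R': "length R' = length R1" "\<forall>x<Suc p. R' ! x = R1 ! x" "\<forall>j<length gs. R' ! (Suc p + j) = int (ys' ! j)"
    using Cons.IH[where ys = ys' and p = "Suc p" and R = R1] Cons.prems(1,5) by auto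
  have "\<forall>j<length (g # gs). R' ! (p + j) = int (ys ! j)"
  proof (intro allI impI)
    fix j assume "j < length (g # gs)"
    with R' R1(2) show "R' ! (p + j) = int (ys ! j)" by (cases j) (auto simp: ys)
  qed
  with exec_g exec_gs R1 R' Cons.prems(5) show ?case by auto
qed

lemma compile_complete_Cn:
  assumes f: "compile_complete f" and gs: "\<forall>g\<in>set gs. compile_complete g"
  shows "compile_complete (Cn f gs)"
  unfolding compile_complete_def
proof (intro allI impI)
  fix ins out b R y
  assume eval: "rec_eval (Cn f gs) (reg_vals R ins) y" and pre: "compile_pre ins out b R"
    and len: "b + scratch (Cn f gs) \<le> length R"
  define s where "s = b + length gs"
  from eval obtain ys where ys: "length ys = length gs"
    "\<forall>j<length gs. rec_eval (gs ! j) (reg_vals R ins) (ys ! j)" "rec_eval f ys y"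
    by (rule rec_eval_CnE) blast
  have "regs_ready ins b R" and "s + scratch_list gs \<le> length R"
    using pre len by (auto simp: compile_pre_def s_def)
  with compile_list_complete[OF gs ys(1,2), where p = b and s = s] obtain R1 where exec_gs: "exec (compile_list gs ins b s) R R1"
    and R1: "length R1 = length R" "\<forall>x<b. R1 ! x = R ! x" "\<forall>j<length gs. R1 ! (b + j) = int (ys ! j)"
    by (auto simp: s_def)
  have args: "reg_vals R1 [b..<s] = ys"
    by (rule nth_equalityI) (use ys(1) R1(3) in \<open>auto simp: s_def\<close>)
  have "\<forall>x\<in>set [b..<s]. 0 \<le> R1 ! x"
    using R1(3) by (auto simp: s_def) (metis add_less_cancel_left le_add_diff_inverse of_nat_0_le_iff)
  then have "compile_pre [b..<s] out s R1"
    using pre R1(2) by (auto simp: compile_pre_def regs_ready_def s_def)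
  moreover have "s + scratch f \<le> length R1" using len R1(1) by (simp add: s_def)
  ultimately obtain R' where exec_f: "exec (compile f [b..<s] out s) R1 R'"
    and R': "length R' = length R1" "R' ! out = int y" "\<forall>x<s. x \<noteq> out \<longrightarrow> R' ! x = R1 ! x"
    using compile_completeD[OF f, of R1 "[b..<s]" y out s] ys(3) unfolding args by blast
  from exec_gs exec_f have "exec (compile (Cn f gs) ins out b) R R'" by (auto simp: s_def)
  with R' R1 show "\<exists>R'. exec (compile (Cn f gs) ins out b) R R' \<and> length R' = length R
      \<and> R' ! out = int y \<and> (\<forall>x<b. x \<noteq> out \<longrightarrow> R' ! x = R ! x)"
    by (auto simp: s_def)
qed

lemma pr_body_complete:
  assumes g: "compile_complete g" and pre: "compile_pre (n # xs) out b R"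
    and len: "b + scratch (Pr f g) \<le> length R" and Ra: "pr_state (Pr f g) b xs R j Ra"
    and j: "j < nat (R ! n)" and eval: "rec_eval (Pr f g) (nat (R ! n) # reg_vals R xs) y"
  shows "\<exists>Rb. exec (pr_body (compile g (b # (b + 1) # xs) (b + 2) (b + 3)) b n) Ra Rb
    \<and> pr_state (Pr f g) b xs R (Suc j) Rb"
proof -
  note P = compile_preD[OF pre]
  obtain v where "rec_eval (Pr f g) (Suc j # reg_vals R xs) v"
    using rec_eval_Pr_below[OF eval] j by (meson Suc_leI)
  then obtain u where "rec_eval (Pr f g) (j # reg_vals R xs) u" and "rec_eval g (j # u # reg_vals R xs) v"
    by (rule rec_eval_PrSucE)
  with Ra have step: "rec_eval g (j # nat (Ra ! (b + 1)) # reg_vals R xs) v"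
    by (auto simp: pr_state_def dest: rec_eval_deterministic)
  have args: "reg_vals Ra (b # (b + 1) # xs) = j # nat (Ra ! (b + 1)) # reg_vals R xs"
    using Ra P by (auto simp: pr_state_def)
  have "compile_pre (b # (b + 1) # xs) (b + 2) (b + 3) Ra" and "b + 3 + scratch g \<le> length Ra"
    using Ra P len by (auto simp: pr_state_def compile_pre_def regs_ready_def)
  then obtain Rc where exec_g: "exec (compile g (b # (b + 1) # xs) (b + 2) (b + 3)) Ra Rc"
    and Rc: "length Rc = length Ra" "Rc ! (b + 2) = int v" "\<forall>x<b + 3. x \<noteq> b + 2 \<longrightarrow> Rc ! x = Ra ! x"
    using compile_completeD[OF g, of Ra "b # (b + 1) # xs" v "b + 2" "b + 3"] step
    unfolding args by blast
  define Rd where "Rd = Rc[b + 1 := Rc ! (b + 2)]"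
  define Rb where "Rb = Rd[b := Rd ! b + Rd ! one_reg]"
  have "Ra ! b < Ra ! n" using Ra P j by (simp add: pr_state_def)
  with exec_g have "exec (pr_body (compile g (b # (b + 1) # xs) (b + 2) (b + 3)) b n) Ra Rb"
    by (auto simp: pr_body_def Rd_def Rb_def)
  moreover have "rec_eval (Pr f g) (Suc j # reg_vals R xs) v"
    using rec_eval.prS[OF _ step] Ra by (simp add: pr_state_def)
  with Rc Ra P len have "pr_state (Pr f g) b xs R (Suc j) Rb"
    by (auto simp: pr_state_def Rd_def Rb_def)
  ultimately show ?thesis by blast
qed

lemma compile_complete_Pr:
  assumes f: "compile_complete f" and g: "compile_complete g"
  shows "compile_complete (Pr f g)"
  unfolding compile_complete_def
proof (intro allI impI)
  fix ins out b R y
  assume eval: "rec_eval (Pr f g) (reg_vals R ins) y" and pre: "compile_pre ins out b R"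
    and len: "b + scratch (Pr f g) \<le> length R"
  then obtain n xs where ins: "ins = n # xs" by (cases ins) (auto elim: rec_eval_PrE)
  note P = compile_preD[OF pre]
  let ?G = "compile g (b # (b + 1) # xs) (b + 2) (b + 3)"
  have eval: "rec_eval (Pr f g) (nat (R ! n) # reg_vals R xs) y" using eval ins by simp
  obtain v0 where v0: "rec_eval f (reg_vals R xs) v0"
    using rec_eval_Pr_below[OF eval, of 0] by (auto elim: rec_eval_Pr0E)
  define R1 where "R1 = R[b := R ! zero_reg]"
  have args: "reg_vals R1 xs = reg_vals R xs"
    using P ins by (auto simp: R1_def)
  have "compile_pre xs (b + 1) (b + 3) R1" and "b + 3 + scratch f \<le> length R1"
    using P ins len by (auto simp: R1_def compile_pre_def regs_ready_def)
  then obtain R2 where exec_f: "exec (compile f xs (b + 1) (b + 3)) R1 R2"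
    and R2: "length R2 = length R1" "R2 ! (b + 1) = int v0" "\<forall>x<b + 3. x \<noteq> b + 1 \<longrightarrow> R2 ! x = R1 ! x"
    using compile_completeD[OF f, of R1 xs v0 "b + 1" "b + 3"] v0 unfolding args by blast
  have "\<exists>R3. exec (Loop (pr_body ?G b n)) R2 R3 \<and> pr_state (Pr f g) b xs R j R3"
    if "j \<le> nat (R ! n)" for j
    using that
  proof (induction j)
    case 0
    have "exec (Loop (pr_body ?G b n)) R2 R2" by (rule exec.Loop_done)
    moreover have "pr_state (Pr f g) b xs R 0 R2"
      using R2 P len v0 by (auto simp: R1_def pr_state_def intro: rec_eval.pr0)
    ultimately show ?case by blast
  next
    case (Suc j)
    then obtain R3 where "exec (Loop (pr_body ?G b n)) R2 R3" and "pr_state (Pr f g) b xs R j R3"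
      by auto
    with pr_body_complete[OF g pre[unfolded ins] len _ _ eval] Suc.prems show ?case
      by (meson Suc_le_lessD exec_Loop_snoc)
  qed
  then obtain R3 where loop: "exec (Loop (pr_body ?G b n)) R2 R3"
    and R3: "pr_state (Pr f g) b xs R (nat (R ! n)) R3"
    by blast
  have "R3 ! b = R3 ! n" using R3 P ins by (simp add: pr_state_def)
  with exec_f loop have "exec (compile (Pr f g) ins out b) R (R3[out := R3 ! (b + 1)])"
    by (auto simp: ins R1_def)
  moreover have "nat (R3 ! (b + 1)) = y"
    using R3 eval by (auto simp: pr_state_def dest: rec_eval_deterministic)
  ultimately show "\<exists>R'. exec (compile (Pr f g) ins out b) R R' \<and> length R' = length R
      \<and> R' ! out = int y \<and> (\<forall>x<b. x \<noteq> out \<longrightarrow> R' ! x = R ! x)"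
    using R3 P len by (auto simp: pr_state_def)
qed

lemma mn_test_complete:
  assumes f: "compile_complete f" and pre: "compile_pre ins out b R"
    and len: "b + scratch (Mn f) \<le> length R" and Ra: "mn_state f b ins R j Ra"
    and eval: "rec_eval f (j # reg_vals R ins) v"
  shows "\<exists>Rc. exec (compile f (b # ins) (b + 1) (b + 2)) Ra Rc \<and> length Rc = length R
    \<and> Rc ! (b + 1) = int v \<and> (\<forall>x<b + 2. x \<noteq> b + 1 \<longrightarrow> Rc ! x = Ra ! x)"
proof -
  note P = compile_preD[OF pre]
  have "compile_pre (b # ins) (b + 1) (b + 2) Ra" and "b + 2 + scratch f \<le> length Ra"
    and args: "reg_vals Ra (b # ins) = j # reg_vals R ins"
    using P Ra len by (auto simp: mn_state_def compile_pre_def regs_ready_def)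
  with compile_completeD[OF f, of Ra "b # ins" v "b + 1" "b + 2"] eval Ra show ?thesis
    unfolding args by (auto simp: mn_state_def)
qed

lemma mn_body_complete:
  assumes f: "compile_complete f" and pre: "compile_pre ins out b R"
    and len: "b + scratch (Mn f) \<le> length R" and Ra: "mn_state f b ins R j Ra"
    and j: "j < y" and eval: "rec_eval (Mn f) (reg_vals R ins) y"
  shows "\<exists>Rb. exec (mn_body (compile f (b # ins) (b + 1) (b + 2)) b) Ra Rb \<and> mn_state f b ins R (Suc j) Rb"
proof -
  note P = compile_preD[OF pre]
  from eval j obtain v where v: "rec_eval f (j # reg_vals R ins) v" "v \<noteq> 0"
    by (auto elim: rec_eval_MnE)
  from mn_test_complete[OF f pre len Ra v(1)] obtain Rc
    where exec_f: "exec (compile f (b # ins) (b + 1) (b + 2)) Ra Rc"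
      and Rc: "length Rc = length R" "Rc ! (b + 1) = int v" "\<forall>x<b + 2. x \<noteq> b + 1 \<longrightarrow> Rc ! x = Ra ! x"
    by blast
  define Rb where "Rb = Rc[b := Rc ! b + Rc ! one_reg]"
  have "Rc ! zero_reg < Rc ! (b + 1)" using Rc Ra P v(2) by (simp add: mn_state_def)
  with exec_f have "exec (mn_body (compile f (b # ins) (b + 1) (b + 2)) b) Ra Rb"
    by (auto simp: mn_body_def Rb_def)
  moreover have "mn_state f b ins R (Suc j) Rb"
    using Rc Ra P len v by (auto simp: mn_state_def Rb_def less_Suc_eq)
  ultimately show ?thesis by blast
qed

lemma compile_complete_Mn:
  assumes f: "compile_complete f"
  shows "compile_complete (Mn f)"
  unfolding compile_complete_def
proof (intro allI impI)
  fix ins out b R y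
  assume eval: "rec_eval (Mn f) (reg_vals R ins) y" and pre: "compile_pre ins out b R"
    and len: "b + scratch (Mn f) \<le> length R"
  note P = compile_preD[OF pre]
  let ?F = "compile f (b # ins) (b + 1) (b + 2)"
  define R1 where "R1 = R[b := R ! zero_reg]"
  have "\<exists>R2. exec (Loop (mn_body ?F b)) R1 R2 \<and> mn_state f b ins R j R2" if "j \<le> y" for j
    using that
  proof (induction j)
    case 0
    have "exec (Loop (mn_body ?F b)) R1 R1" by (rule exec.Loop_done)
    with P len show ?case by (auto simp: R1_def mn_state_def)
  next
    case (Suc j)
    then obtain R2 where "exec (Loop (mn_body ?F b)) R1 R2" and "mn_state f b ins R j R2"
      by auto
    with mn_body_complete[OF f pre len _ _ eval] Suc.prems show ?case
      by (meson Suc_le_lessD exec_Loop_snoc)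
  qed
  then obtain R2 where loop: "exec (Loop (mn_body ?F b)) R1 R2" and R2: "mn_state f b ins R y R2"
    by blast
  from eval have "rec_eval f (y # reg_vals R ins) 0" by (auto elim: rec_eval_MnE)
  from mn_test_complete[OF f pre len R2 this] obtain Rc where exec_f: "exec ?F R2 Rc"
    and Rc: "length Rc = length R" "Rc ! (b + 1) = 0" "\<forall>x<b + 2. x \<noteq> b + 1 \<longrightarrow> Rc ! x = R2 ! x"
    by auto
  define R' where "R' = Rc[out := Rc ! b]"
  have "Rc ! (b + 1) = Rc ! zero_reg" using Rc R2 P by (simp add: mn_state_def)
  with loop exec_f have "exec (compile (Mn f) ins out b) R R'"
    by (auto simp: R1_def R'_def)
  moreover have "length R' = length R \<and> R' ! out = int y \<and> (\<forall>x<b. x \<noteq> out \<longrightarrow> R' ! x = R ! x)"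
    using Rc R2 P len by (auto simp: R'_def mn_state_def)
  ultimately show "\<exists>R'. exec (compile (Mn f) ins out b) R R' \<and> length R' = length R
      \<and> R' ! out = int y \<and> (\<forall>x<b. x \<noteq> out \<longrightarrow> R' ! x = R ! x)"
    by blast
qed

lemma compile_complete: "compile_complete f"
proof (induction f)
  case (Cn f gs)
  then show ?case by (simp add: compile_complete_Cn)
qed (simp_all add: compile_complete_Zr compile_complete_Sc compile_complete_Pj compile_complete_Pr
  compile_complete_Mn)

theorem exec_compile_iff:
  assumes "compile_pre ins out b R" and "b + scratch f \<le> length R"
  shows "(\<exists>R'. exec (compile f ins out b) R R') \<longleftrightarrow> (\<exists>y. rec_eval f (reg_vals R ins) y)"
proof
  assume "\<exists>R'. exec (compile f ins out b) R R'"
  then obtain R' where "exec (compile f ins out b) R R'" by blast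
  with compile_soundD[OF compile_sound _ assms] show "\<exists>y. rec_eval f (reg_vals R ins) y" by blast
next
  assume "\<exists>y. rec_eval f (reg_vals R ins) y"
  then obtain y where "rec_eval f (reg_vals R ins) y" by blast
  with compile_completeD[OF compile_complete _ assms] show "\<exists>R'. exec (compile f ins out b) R R'" by blast
qed


lemma prog_ok_compile:
  assumes "\<forall>x\<in>set ins. x < k" and "0 < out" and "out < k" and "0 < b" and "b + scratch f \<le> k"
    and "zero_reg < k" and "one_reg < k"
  shows "prog_ok k (compile f ins out b)"
  using assms
proof (induction f arbitrary: ins out b)
  case (Cn f gs)
  have "prog_ok k (compile_list gs' ins p s)"
    if "set gs' \<subseteq> set gs" "0 < p" "p + length gs' \<le> s" "s + scratch_list gs' \<le> k" for gs' p s
    using that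
  proof (induction gs' arbitrary: p)
    case Nil
    then show ?case using Cn.prems by (simp add: prog_skip_def)
  next
    case (Cons g gs')
    then show ?case using Cn.IH(2)[of g ins p s] Cn.prems by auto
  qed
  with Cn show ?case by auto
next
  case Sc
  then show ?case by (cases ins) (auto simp: prog_abort_def pr_body_def mn_body_def)
next
  case (Pr f g)
  then show ?case by (cases ins) (auto simp: prog_abort_def pr_body_def mn_body_def)
qed (auto simp: prog_abort_def pr_body_def mn_body_def)

section \<open>An SRT simulating a register program\<close>

fun index_of :: "'a list \<Rightarrow> 'a \<Rightarrow> nat" where
  "index_of [] x = 0"
| "index_of (y # ys) x = (if x = y then 0 else Suc (index_of ys x))"

lemma index_of_less: "x \<in> set xs \<Longrightarrow> index_of xs x < length xs"
  by (induction xs) auto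

lemma nth_index_of: "x \<in> set xs \<Longrightarrow> xs ! index_of xs x = x"
  by (induction xs) auto

lemma index_of_inj: "x \<in> set xs \<Longrightarrow> y \<in> set xs \<Longrightarrow> index_of xs x = index_of xs y \<Longrightarrow> x = y"
  by (metis nth_index_of)

definition all_cmps :: "nat \<Rightarrow> cmp list list" where
  "all_cmps k = List.n_lists k [Gt, Eq, Lt]"

definition all_upds :: "nat \<Rightarrow> upd list list" where
  "all_upds k = List.n_lists k [Old, New, Add]"

lemma set_all_cmps: "set (all_cmps k) = {l. length l = k}"
proof -
  have "set [Gt, Eq, Lt] = UNIV" using cmp.exhaust by auto
  then show ?thesis unfolding all_cmps_def set_n_lists by auto
qed

lemma set_all_upds: "set (all_upds k) = {m. length m = k}"
proof -
  have "set [Old, New, Add] = UNIV" using upd.exhaust by auto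
  then show ?thesis unfolding all_upds_def set_n_lists by auto
qed

definition cmp_vector :: "int \<Rightarrow> int list \<Rightarrow> cmp list" where
  "cmp_vector d R = map (\<lambda>r. if r < d then Gt else if r = d then Eq else Lt) R"

lemma length_cmp_vector [simp]: "length (cmp_vector d R) = length R"
  by (simp add: cmp_vector_def)

lemma cmp_sat_cmp_vector: "i < length R \<Longrightarrow> cmp_sat (cmp_vector d R ! i) d (R ! i)"
  by (auto simp: cmp_vector_def)

definition keep_all :: "nat \<Rightarrow> upd list" where
  "keep_all k = replicate k Old"

lemma upd_keep_all:
  assumes "length R' = k" "length R = k" "\<forall>j<k. R' ! j = upd_val (keep_all k ! j) (R ! j) d"
  shows "R' = R"
  using assms by (intro nth_equalityI) (auto simp: keep_all_def)

text \<open>An instruction is executed on reading a data value \<open>d\<close>: the guard forces \<open>d\<close> to equal the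
  source register, and the update \<open>New\<close> or \<open>Add\<close> then copies or adds it.\<close>
fun instr_guard :: "instr \<Rightarrow> cmp list \<Rightarrow> bool" where
  "instr_guard (Copy a c) l \<longleftrightarrow> l ! c = Eq"
| "instr_guard (Add_to a c) l \<longleftrightarrow> l ! c = Eq"
| "instr_guard (Guard_eq a c) l \<longleftrightarrow> l ! a = Eq \<and> l ! c = Eq"
| "instr_guard (Guard_lt a c) l \<longleftrightarrow> l ! a = Eq \<and> l ! c = Lt"

fun instr_upd :: "nat \<Rightarrow> instr \<Rightarrow> upd list" where
  "instr_upd k (Copy a c) = (keep_all k)[a := New]"
| "instr_upd k (Add_to a c) = (keep_all k)[a := Add]"
| "instr_upd k (Guard_eq a c) = keep_all k"
| "instr_upd k (Guard_lt a c) = keep_all k"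

lemma length_instr_upd [simp]: "length (instr_upd k i) = k"
  by (cases i) (auto simp: keep_all_def)

lemma exec_instr_of_transition:
  assumes ok: "instr_ok k i" and len: "length R = k" "length R' = k" and guard: "instr_guard i l"
    and sat: "\<forall>j<k. cmp_sat (l ! j) d (R ! j)"
    and upd: "\<forall>j<k. R' ! j = upd_val (instr_upd k i ! j) (R ! j) d"
  shows "exec_instr i R R' \<and> R' ! 0 = R ! 0"
proof (cases i)
  case (Copy a c)
  with ok sat have "cmp_sat (l ! c) d (R ! c)" by simp
  with guard Copy have "d = R ! c" by simp
  moreover have "R' = R[a := d]"
    using upd len ok Copy by (intro nth_equalityI) (auto simp: keep_all_def nth_list_update)
  ultimately show ?thesis using Copy ok by simp
next
  case (Add_to a c)
  with ok sat have "cmp_sat (l ! c) d (R ! c)" by simp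
  with guard Add_to have "d = R ! c" by simp
  moreover have "R' = R[a := R ! a + d]"
    using upd len ok Add_to by (intro nth_equalityI) (auto simp: keep_all_def nth_list_update)
  ultimately show ?thesis using Add_to ok by simp
next
  case (Guard_eq a c)
  with ok sat have "cmp_sat (l ! a) d (R ! a)" "cmp_sat (l ! c) d (R ! c)" by simp_all
  moreover have "R' = R" by (rule upd_keep_all[OF len(2,1), of d]) (use upd Guard_eq in simp)
  ultimately show ?thesis using guard Guard_eq by simp
next
  case (Guard_lt a c)
  with ok sat have "cmp_sat (l ! a) d (R ! a)" "cmp_sat (l ! c) d (R ! c)" by simp_all
  moreover have "R' = R" by (rule upd_keep_all[OF len(2,1), of d]) (use upd Guard_lt in simp)
  ultimately show ?thesis using guard Guard_lt by simp
qed

lemma transition_of_exec_instr: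
  assumes ok: "instr_ok k i" and len: "length R = k" and exec: "exec_instr i R R'"
  shows "\<exists>d. instr_guard i (cmp_vector d R) \<and> (\<forall>j<k. R' ! j = upd_val (instr_upd k i ! j) (R ! j) d)"
proof (cases i)
  case (Copy a c)
  with ok len exec show ?thesis
    by (intro exI[of _ "R ! c"]) (auto simp: cmp_vector_def keep_all_def nth_list_update)
next
  case (Add_to a c)
  with ok len exec show ?thesis
    by (intro exI[of _ "R ! c"]) (auto simp: cmp_vector_def keep_all_def nth_list_update)
next
  case (Guard_eq a c)
  with ok len exec show ?thesis
    by (intro exI[of _ "R ! c"]) (auto simp: cmp_vector_def keep_all_def)
next
  case (Guard_lt a c)
  with ok len exec show ?thesis
    by (intro exI[of _ "R ! a"]) (auto simp: cmp_vector_def keep_all_def)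
qed

text \<open>Once the program has
  terminated, the SRT may emit either of the labels \<open>1\<close> and \<open>2\<close>: this is the only source of
  non-functionality.\<close>
inductive sim_edge :: "nat \<Rightarrow> prog list \<Rightarrow> cmp list \<Rightarrow> upd list \<Rightarrow> nat \<Rightarrow> prog list \<Rightarrow> bool"
  for k where
  Instr: "instr_guard i l \<Longrightarrow> sim_edge k (Instr i # K) l (instr_upd k i) 0 K"
| Seq: "sim_edge k (Seq A B # K) l (keep_all k) 0 (A # B # K)"
| Loop_done: "sim_edge k (Loop A # K) l (keep_all k) 0 K"
| Loop_step: "sim_edge k (Loop A # K) l (keep_all k) 0 (A # Loop A # K)"
| Halted: "\<gamma> \<in> {1, 2} \<Longrightarrow> sim_edge k [] l (keep_all k) \<gamma> []"

lemma sim_edge_small_step: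
  assumes edge: "sim_edge k K l m \<gamma> K'" and "K \<noteq> []" and ok: "\<forall>Q\<in>set K. prog_ok k Q"
    and len: "length R = k" "length R' = k" and sat: "\<forall>j<k. cmp_sat (l ! j) d (R ! j)"
    and upd: "\<forall>j<k. R' ! j = upd_val (m ! j) (R ! j) d"
  shows "small_step (K, R) (K', R') \<and> R' ! 0 = R ! 0 \<and> \<gamma> = 0"
proof -
  have keep: "R' = R" if "m = keep_all k"
    by (rule upd_keep_all[OF len(2,1), of d]) (use upd that in simp)
  from edge show ?thesis
  proof cases
    case (Instr i)
    then have "instr_ok k i" using ok by simp
    from exec_instr_of_transition[OF this len \<open>instr_guard i l\<close> sat] upd Instr
    show ?thesis by (auto intro: small_step.Instr)
  next
    case Halted
    with \<open>K \<noteq> []\<close> show ?thesis by simp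
  qed (use keep in \<open>auto intro: small_step.intros\<close>)
qed

lemma small_step_sim_edge:
  assumes step: "small_step (K, R) (K', R')" and ok: "\<forall>Q\<in>set K. prog_ok k Q" and len: "length R = k"
  shows "\<exists>d m. sim_edge k K (cmp_vector d R) m 0 K' \<and> length m = k
    \<and> (\<forall>j<k. R' ! j = upd_val (m ! j) (R ! j) d)"
  using step
proof cases
  case (Instr i)
  with ok transition_of_exec_instr[OF _ len] show ?thesis
    by (fastforce intro: sim_edge.Instr)
qed (auto simp: keep_all_def intro!: exI[of _ "keep_all k"] sim_edge.intros)

text \<open>States are the positions in \<open>L\<close> of the stacks; registers are copied verbatim.\<close>
definition sim_trans :: "prog list list \<Rightarrow> nat \<Rightarrow> trans list" where
  "sim_trans L k = [(index_of L K, 0, l, m, 0, \<gamma>, index_of L K').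
     K \<leftarrow> L, l \<leftarrow> all_cmps k, m \<leftarrow> all_upds k, \<gamma> \<leftarrow> [0, 1, 2], K' \<leftarrow> L, sim_edge k K l m \<gamma> K']"

lemma set_sim_trans:
  "tr \<in> set (sim_trans L k) \<longleftrightarrow> (\<exists>K l m \<gamma> K'. K \<in> set L \<and> K' \<in> set L
     \<and> length l = k \<and> length m = k \<and> \<gamma> \<in> {0, 1, 2} \<and> sim_edge k K l m \<gamma> K'
     \<and> tr = (index_of L K, 0, l, m, 0, \<gamma>, index_of L K'))"
  unfolding sim_trans_def by (simp add: set_all_cmps set_all_upds) blast

definition srt_of_prog :: "prog list list \<Rightarrow> nat \<Rightarrow> prog \<Rightarrow> int list \<Rightarrow> int srt" where
  "srt_of_prog L k P R0 = \<lparr>states = [0..<length L], in_labels = [0], out_labels = [0, 1, 2],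
     init = index_of L [P], nregs = k, init_regs = R0, delta = sim_trans L k\<rparr>"

lemma srt_of_prog_simps [simp]:
  "states (srt_of_prog L k P R0) = [0..<length L]" "in_labels (srt_of_prog L k P R0) = [0]"
  "out_labels (srt_of_prog L k P R0) = [0, 1, 2]" "init (srt_of_prog L k P R0) = index_of L [P]"
  "nregs (srt_of_prog L k P R0) = k" "init_regs (srt_of_prog L k P R0) = R0"
  "delta (srt_of_prog L k P R0) = sim_trans L k"
  by (simp_all add: srt_of_prog_def)

lemma srt_runs_snoc:
  "srt_runs S c s t c' \<Longrightarrow> srt_step S c' a b c'' \<Longrightarrow> srt_runs S c (s @ [a]) (t @ [b]) c''"
  by (induction rule: srt_runs.induct) (auto intro: srt_runs.intros)

lemma srt_runs_length: "srt_runs S c s t c' \<Longrightarrow> length s = length t"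
  by (induction rule: srt_runs.induct) auto

lemma srt_functional_iff:
  "srt_functional S \<longleftrightarrow> (\<forall>s t1 t2. srt_generates S s t1 \<longrightarrow> srt_generates S s t2 \<longrightarrow> t1 = t2)"
proof -
  have length: "length s = length t" if "srt_generates S s t" for s t
    using that srt_runs_length unfolding srt_generates_def by blast
  have "zip s t \<in> srt_sem S \<longleftrightarrow> srt_generates S s t" if "length t = length s" for s t
  proof
    assume "zip s t \<in> srt_sem S"
    then obtain s' t' where "zip s t = zip s' t'" "length s' = length t'" "srt_generates S s' t'"
      unfolding srt_sem_def by blast
    with that show "srt_generates S s t" by (metis map_fst_zip map_snd_zip)
  next
    assume "srt_generates S s t"
    with that show "zip s t \<in> srt_sem S"
      unfolding srt_sem_def by (intro CollectI exI[of _ s] exI[of _ t]) simp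
  qed
  with length show ?thesis
    unfolding srt_functional_def by metis
qed

locale stack_simulation =
  fixes P :: prog and k :: nat and L :: "prog list list"
  assumes set_L: "set L = stacks P" and prog_ok: "prog_ok k P"
begin

abbreviation sim :: "int list \<Rightarrow> int srt" where
  "sim R0 \<equiv> srt_of_prog L k P R0"

abbreviation state :: "prog list \<Rightarrow> nat" where
  "state K \<equiv> index_of L K"

lemma prog_ok_stack: "K \<in> set L \<Longrightarrow> \<forall>Q\<in>set K. prog_ok k Q"
  using prog_ok_stacks prog_ok set_L by blast

lemma wf_sim:
  assumes "0 < k" and "length R0 = k"
  shows "wf_srt (sim R0)"
proof -
  have "[P] \<in> set L" using set_L singleton_in_stacks by blast
  then show ?thesis
    using assms by (auto simp: wf_srt_def set_sim_trans index_of_less)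
qed

lemma srt_step_sim_of_edge:
  assumes "K \<in> set L" and "K' \<in> set L" and "sim_edge k K l m \<gamma> K'" and "length l = k" and "length m = k"
    and "\<gamma> \<in> {0, 1, 2}" and "length R' = k" and "\<forall>j<k. cmp_sat (l ! j) d (R ! j)"
    and "\<forall>j<k. R' ! j = upd_val (m ! j) (R ! j) d"
  shows "srt_step (sim R0) (state K, R) (0, d) (\<gamma>, R' ! 0) (state K', R')"
  unfolding srt_step_def
  by (rule bexI[where x = "(state K, 0, l, m, 0, \<gamma>, state K')"]) (use assms in \<open>auto simp: set_sim_trans\<close>)

lemma sim_edge_of_srt_step:
  assumes "srt_step (sim R0) (state K, R) (\<sigma>, d) (\<gamma>, e) (q', R')" and "K \<in> set L"
  shows "\<exists>l m K'. K' \<in> set L \<and> q' = state K' \<and> sim_edge k K l m \<gamma> K' \<and> length R' = k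
    \<and> (\<forall>j<k. cmp_sat (l ! j) d (R ! j)) \<and> (\<forall>j<k. R' ! j = upd_val (m ! j) (R ! j) d) \<and> e = R' ! 0"
proof -
  from assms(1) obtain tr where tr: "tr \<in> set (sim_trans L k)"
    and step: "case tr of (q, \<sigma>', l, m, u, \<gamma>', q'') \<Rightarrow> state K = q \<and> \<gamma> = \<gamma>' \<and> q' = q''
      \<and> length R' = k \<and> (\<forall>j<k. cmp_sat (l ! j) d (R ! j))
      \<and> (\<forall>j<k. R' ! j = upd_val (m ! j) (R ! j) d) \<and> e = R' ! u"
    unfolding srt_step_def by fastforce
  from tr obtain K1 l m K' where K1: "K1 \<in> set L" and "K' \<in> set L" "sim_edge k K1 l m \<gamma> K'"
    and "tr = (state K1, 0, l, m, 0, \<gamma>, state K')"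
    using step unfolding set_sim_trans by auto
  moreover from this step have "state K = state K1" by simp
  with K1 assms(2) have "K1 = K" by (blast dest: index_of_inj)
  ultimately show ?thesis using step by auto
qed

lemma step_sim_backward:
  assumes step: "srt_step (sim R0) (state K, R) a b c'" and K: "K \<in> set L" and len: "length R = k"
  shows "\<exists>K' R'. c' = (state K', R') \<and> K' \<in> set L \<and> length R' = k \<and> snd b = R ! 0 \<and> R' ! 0 = R ! 0
    \<and> (if K = [] then K' = [] \<and> R' = R else small_step (K, R) (K', R') \<and> fst b = 0)"
proof -
  obtain q' R' where c': "c' = (q', R')" by fastforce
  obtain \<sigma> d \<gamma> e where ab: "a = (\<sigma>, d)" "b = (\<gamma>, e)" by fastforce
  from sim_edge_of_srt_step[OF step[unfolded c' ab] K]
  obtain l m K' where K': "K' \<in> set L" "q' = state K'" and edge: "sim_edge k K l m (fst b) K'"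
    and R': "length R' = k" "\<forall>j<k. cmp_sat (l ! j) d (R ! j)"
      "\<forall>j<k. R' ! j = upd_val (m ! j) (R ! j) d" "snd b = R' ! 0"
    unfolding ab by auto
  show ?thesis
  proof (cases "K = []")
    case True
    with edge have "K' = []" "m = keep_all k" by (auto elim: sim_edge.cases)
    moreover from this have "R' = R" by (intro upd_keep_all[OF R'(1) len, of d]) (use R'(3) in simp)
    ultimately show ?thesis using True c' K' R' by auto
  next
    case False
    with sim_edge_small_step[OF edge False prog_ok_stack[OF K] len R'(1,2,3)] c' K' R'
    show ?thesis by auto
  qed
qed

lemma step_sim_forward:
  assumes step: "small_step (K, R) (K', R')" and K: "K \<in> set L" and len: "length R = k"
  shows "\<exists>d. srt_step (sim R0) (state K, R) (0, d) (0, R ! 0) (state K', R')"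
proof -
  obtain d m where edge: "sim_edge k K (cmp_vector d R) m 0 K'" and m: "length m = k"
    and upd: "\<forall>j<k. R' ! j = upd_val (m ! j) (R ! j) d"
    using small_step_sim_edge[OF step prog_ok_stack[OF K] len] by blast
  have K': "K' \<in> set L" using stacks_closed[OF _ step] K set_L by blast
  have len': "length R' = k" using small_step_length[OF step] len by simp
  have sat: "\<forall>j<k. cmp_sat (cmp_vector d R ! j) d (R ! j)" using cmp_sat_cmp_vector len by simp
  have "K \<noteq> []" using step by (auto elim: small_step.cases)
  with sim_edge_small_step[OF edge _ prog_ok_stack[OF K] len len' sat upd] have "R' ! 0 = R ! 0" by blast
  with srt_step_sim_of_edge[OF K K' edge _ m _ len' sat upd] len show ?thesis by auto
qed

lemma step_sim_halted:
  assumes "length R = k" and "\<gamma> \<in> {1, 2}"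
  shows "srt_step (sim R0) (state [], R) (0, 0) (\<gamma>, R ! 0) (state [], R)"
proof -
  have "[] \<in> set L" using set_L Nil_in_stacks by blast
  moreover have "sim_edge k [] (cmp_vector 0 R) (keep_all k) \<gamma> []" using assms(2) by (rule sim_edge.Halted)
  ultimately show ?thesis
    using srt_step_sim_of_edge[of "[]" "[]" "cmp_vector 0 R" "keep_all k" \<gamma> R 0 R] assms
    by (auto simp: keep_all_def cmp_sat_cmp_vector)
qed

lemma runs_sim_forward:
  "small_step\<^sup>*\<^sup>* (K, R) (K', R') \<Longrightarrow> K \<in> set L \<Longrightarrow> length R = k
    \<Longrightarrow> \<exists>s t. srt_runs (sim R0) (state K, R) s t (state K', R')"
proof (induction rule: converse_rtranclp_induct2)
  case refl
  then show ?case by (auto intro: srt_runs.nil)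
next
  case (step K R K1 R1)
  have "K1 \<in> set L" using stacks_closed[OF _ step.hyps(1)] step.prems set_L by blast
  moreover have "length R1 = k" using small_step_length[OF step.hyps(1)] step.prems by simp
  ultimately show ?case
    using step.IH step_sim_forward[OF step.hyps(1) step.prems] by (blast intro: srt_runs.cons)
qed

lemma runs_sim_backward:
  "srt_runs (sim R0) c s t c' \<Longrightarrow> c = (state K, R) \<Longrightarrow> K \<in> set L \<Longrightarrow> length R = k
    \<Longrightarrow> (\<forall>x\<in>set t. snd x = R ! 0) \<and> ((\<exists>x\<in>set t. fst x \<noteq> 0) \<longrightarrow> (\<exists>R'. small_step\<^sup>*\<^sup>* (K, R) ([], R')))"
proof (induction arbitrary: K R rule: srt_runs.induct)
  case (nil c)
  then show ?case by simp
next
  case (cons c a b c1 s t c2)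
  from step_sim_backward[OF cons.hyps(1)[unfolded cons.prems(1)] cons.prems(2,3)]
  obtain K' R' where c1: "c1 = (state K', R')" and K': "K' \<in> set L" "length R' = k"
    and out: "snd b = R ! 0" "R' ! 0 = R ! 0"
    and step: "if K = [] then K' = [] \<and> R' = R else small_step (K, R) (K', R') \<and> fst b = 0"
    by blast
  note IH = cons.IH[OF c1 K']
  have "\<exists>R''. small_step\<^sup>*\<^sup>* (K, R) ([], R'')" if "\<exists>x\<in>set (b # t). fst x \<noteq> 0"
  proof (cases "K = []")
    case False
    with step that have "small_step (K, R) (K', R')" "\<exists>x\<in>set t. fst x \<noteq> 0" by auto
    with IH show ?thesis by (meson converse_rtranclp_into_rtranclp)
  qed auto
  with IH out show ?case by auto
qed

theorem functional_sim_iff: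
  assumes len: "length R0 = k"
  shows "srt_functional (sim R0) \<longleftrightarrow> \<not> (\<exists>R'. exec P R0 R')"
proof
  assume functional: "srt_functional (sim R0)"
  show "\<not> (\<exists>R'. exec P R0 R')"
  proof
    assume "\<exists>R'. exec P R0 R'"
    then obtain R' where steps: "small_step\<^sup>*\<^sup>* ([P], R0) ([], R')"
      using exec_iff_small_steps by blast
    have P: "[P] \<in> set L" using set_L singleton_in_stacks by blast
    with runs_sim_forward[OF steps _ len] obtain s t
      where run: "srt_runs (sim R0) (state [P], R0) s t (state [], R')" by blast
    have "length R' = k" using steps len
      by (induction rule: rtranclp_induct2) (auto dest: small_step_length)
    then have "srt_generates (sim R0) (s @ [(0, 0)]) (t @ [(\<gamma>, R' ! 0)])" if "\<gamma> \<in> {1, 2}" for \<gamma>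
      using srt_runs_snoc[OF run step_sim_halted[OF _ that]] unfolding srt_generates_def by auto
    with functional have "t @ [(1, R' ! 0)] = t @ [(2, R' ! 0)]"
      unfolding srt_functional_iff by blast
    then show False by simp
  qed
next
  assume "\<not> (\<exists>R'. exec P R0 R')"
  then have no_halt: "\<not> (\<exists>R'. small_step\<^sup>*\<^sup>* ([P], R0) ([], R'))"
    using exec_iff_small_steps by blast
  have P: "[P] \<in> set L" using set_L singleton_in_stacks by blast
  have "t = replicate (length s) (0, R0 ! 0)" if "srt_generates (sim R0) s t" for s t
  proof -
    from that obtain c' where run: "srt_runs (sim R0) (state [P], R0) s t c'"
      unfolding srt_generates_def by auto
    with runs_sim_backward[OF run refl P len] no_halt have "\<forall>x\<in>set t. x = (0, R0 ! 0)"
      by (auto simp: prod_eq_iff)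
    then have "replicate (length t) (0, R0 ! 0) = t" by (rule replicate_length_same)
    with srt_runs_length[OF run] show ?thesis by simp
  qed
  then show "srt_functional (sim R0)"
    unfolding srt_functional_iff by blast
qed

end

section \<open>The diagonal SRT\<close>

definition self_code :: "nat list \<Rightarrow> nat" where
  "self_code a = list_encode [a ! 0, a ! 1, a ! 2, a ! 3, a ! 4,
     list_encode (map (\<lambda>x. int_encode (int x)) a @ list_decode (a ! 6)), a ! 5]"

definition rf_self_code :: recf where
  "rf_self_code = rf_list [Pj 0, Pj 1, Pj 2, Pj 3, Pj 4, rf_prepend_ints [0..<7] 6, Pj 5]"

lemma rec_eval_self_code:
  assumes "length a = 7"
  shows "rec_eval rf_self_code a (self_code a)"
proof -
  have "map (\<lambda>i. int_encode (int (a ! i))) [0..<7] = map (\<lambda>x. int_encode (int x)) a"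
    using assms by (intro nth_equalityI) auto
  with rec_eval_prepend_ints[of "[0..<7]" a 6] assms
  have "rec_eval (rf_prepend_ints [0..<7] 6) a (list_encode (map (\<lambda>x. int_encode (int x)) a @ list_decode (a ! 6)))"
    by (simp only:) simp
  with assms show ?thesis
    unfolding rf_self_code_def self_code_def by (intro rec_eval_list) (auto intro: rec_eval_Pj)
qed

definition rf_diag :: "recf \<Rightarrow> recf" where
  "rf_diag r = Cn rf_halt_if_nonzero [Cn r [rf_self_code]]"

lemma rf_diag_halts_iff:
  assumes "length a = 7" and r: "rec_eval r [self_code a] v"
  shows "(\<exists>y. rec_eval (rf_diag r) a y) \<longleftrightarrow> v \<noteq> 0"
proof -
  have inner: "rec_eval (Cn r [rf_self_code]) a v"
    using rec_eval_self_code[OF assms(1)] r by (rule rec_eval_Cn1)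
  show ?thesis
  proof
    assume "\<exists>y. rec_eval (rf_diag r) a y"
    then obtain y ys where "length ys = 1" "rec_eval (Cn r [rf_self_code]) a (ys ! 0)"
      "rec_eval rf_halt_if_nonzero ys y"
      unfolding rf_diag_def by (auto elim: rec_eval_CnE)
    moreover from this inner have "ys = [v]"
      by (cases ys) (auto dest: rec_eval_deterministic)
    ultimately show "v \<noteq> 0" by (simp add: rec_eval_halt_if_nonzero)
  next
    assume "v \<noteq> 0"
    then have "rec_eval rf_halt_if_nonzero [v] 0" by (simp add: rec_eval_halt_if_nonzero)
    with inner show "\<exists>y. rec_eval (rf_diag r) a y"
      unfolding rf_diag_def by (blast intro: rec_eval_Cn1)
  qed
qed

text \<open>Registers \<open>0\<close>--\<open>6\<close> of the diagonal SRT hold the codes of all its components except the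
  initial register contents, in the order of \<^const>\<open>self_code\<close>; register \<open>6\<close> holds the code of
  the remaining registers \<open>rest\<close>. So \<^const>\<open>self_code\<close> recovers the code of the SRT from its own
  registers.\<close>
definition code_regs :: "prog list list \<Rightarrow> nat \<Rightarrow> prog \<Rightarrow> int list \<Rightarrow> nat list" where
  "code_regs L k P rest = [list_encode [0..<length L], list_encode [0], list_encode [0, 1, 2],
     index_of L [P], k, list_encode (map enc_trans (sim_trans L k)), list_encode (map int_encode rest)]"

lemma enc_srt_of_prog_code_regs:
  "enc_srt (srt_of_prog L k P (map int (code_regs L k P rest) @ rest)) = self_code (code_regs L k P rest)"
  by (simp add: enc_srt_def self_code_def code_regs_def)

text \<open>Registers \<open>zero_reg = 7\<close> and \<open>one_reg = 8\<close> hold the constants, register \<open>9\<close> receives the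
  result and the registers from \<open>10\<close> on are scratch space.\<close>
definition work_regs :: "recf \<Rightarrow> int list" where
  "work_regs f = [0, 1] @ replicate (scratch f + 1) 0"

lemma exec_compile_code_iff:
  assumes "length c = 7"
  shows "(\<exists>R'. exec (compile f [0..<7] 9 10) (map int c @ work_regs f) R') \<longleftrightarrow> (\<exists>y. rec_eval f c y)"
proof -
  let ?R = "map int c @ work_regs f"
  have code: "?R ! x = int (c ! x)" if "x < 7" for x
    using assms that by (simp add: nth_append)
  have "reg_vals ?R [0..<7] = c"
    using assms code by (intro nth_equalityI) auto
  moreover have "?R ! zero_reg = 0" "?R ! one_reg = 1"
    using assms by (simp_all add: zero_reg_def one_reg_def nth_append work_regs_def)
  then have "compile_pre [0..<7] 9 10 ?R"
    using code by (auto simp: compile_pre_def regs_ready_def zero_reg_def one_reg_def)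
  moreover have "10 + scratch f \<le> length ?R"
    using assms by (simp add: work_regs_def)
  ultimately show ?thesis
    using exec_compile_iff[of "[0..<7]" 9 10 ?R f] by simp
qed

theorem theorem5p2:
  shows "\<not> (\<exists>r. decides_on r enc_srt {S :: int srt. wf_srt S} srt_functional)"
proof
  assume "\<exists>r. decides_on r enc_srt {S :: int srt. wf_srt S} srt_functional"
  then obtain r where r: "decides_on r enc_srt {S :: int srt. wf_srt S} srt_functional" by blast
  define f where "f = rf_diag r"
  define P where "P = compile f [0..<7] 9 10"
  define k where "k = 10 + scratch f"
  obtain L where L: "set L = stacks P" using finite_list[OF finite_stacks] by blast
  define c where "c = code_regs L k P (work_regs f)"
  define R0 where "R0 = map int c @ work_regs f"
  have c: "length c = 7" and R0: "length R0 = k"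
    by (simp_all add: c_def code_regs_def R0_def work_regs_def k_def)
  have "prog_ok k P"
    unfolding P_def by (rule prog_ok_compile) (auto simp: k_def zero_reg_def one_reg_def)
  with L interpret stack_simulation P k L by unfold_locales
  have "wf_srt (sim R0)" using R0 by (intro wf_sim) (simp_all add: k_def)
  with r have "rec_eval r [enc_srt (sim R0)] (if srt_functional (sim R0) then 1 else 0)"
    unfolding decides_on_def by blast
  moreover have "enc_srt (sim R0) = self_code c"
    unfolding R0_def c_def by (rule enc_srt_of_prog_code_regs)
  ultimately have decision: "rec_eval r [self_code c] (if srt_functional (sim R0) then 1 else 0)"
    by simp
  have "srt_functional (sim R0) \<longleftrightarrow> \<not> (\<exists>y. rec_eval f c y)"
    unfolding functional_sim_iff[OF R0] using exec_compile_code_iff[OF c] by (simp add: P_def R0_def)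
  moreover have "(\<exists>y. rec_eval f c y) \<longleftrightarrow> srt_functional (sim R0)"
    using rf_diag_halts_iff[OF c decision] by (simp add: f_def)
  ultimately show False by blast
qed

end
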